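(* Let $q\geq 3$, $n\ge 2$, let $A$ be an $n\times n$ hermitian matrix over $\mathbb{F}_{q^2}$ of rank $n-1$, and let $\mathcal{L}_1\neq\mathcal{L}_2$ be two leaves of $A$. For $i=1,2$ let $N_i$ be the hermitian matrix of rank $n-1$ of which $\mathcal{L}_i^{-1}=\{X^{-1}:X\in\mathcal{L}_i\}$ is a leaf. Then there exist an invertible matrix $Q$ and column vectors $\mathbf{z}_1\neq\mathbf{z}_2$ in $\mathbb{F}_{q^2}^{n-1}$ such that $$N_i=Q\begin{bmatrix}I_{n-1}&\mathbf{z}_i\\ \mathbf{z}_i^\ast&\mathbf{z}_i^\ast\mathbf{z}_i\end{bmatrix}Q^\ast\qquad(i=1,2),$$ and consequently $\operatorname{rank}(N_1-N_2)=2$.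
   Context: $\mathbb{F}_{q^2}$ is the field with $q^2$ elements with involution $\bar x=x^q$, fixed field $\mathbb{F}_q$; $X^\ast=\bar X^\top$; hermitian means $A^\ast=A$. Leaf: if $A$ is an $n\times n$ hermitian matrix of rank $s<n$ and $\mathbf{x}$ is not in the column space of $A$, then $\{A+\lambda\mathbf{x}\mathbf{x}^\ast: 0\ne\lambda\in\mathbb{F}_q\}$ is a leaf of $A$. For a leaf $\mathcal{L}$ of a rank-$(n-1)$ matrix (whose elements are invertible), $\mathcal{L}^{-1}$ is a leaf of a unique hermitian matrix of rank $n-1$. *)

theory Defs
  imports "Jordan_Normal_Form.DL_Rank"
begin

text \<open>Setting: the field \<open>F_{q^2}\<close> is a finite field type \<open>'a\<close> with \<open>CARD('a) = q^2\<close>;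
  the involution is \<open>x \<mapsto> x^q\<close>, whose fixed field is \<open>F_q = {x. x^q = x}\<close>.\<close>

definition cnj_vec :: "nat \<Rightarrow> 'a::field vec \<Rightarrow> 'a vec" where
  "cnj_vec q v = map_vec (\<lambda>a. a ^ q) v"

definition adj :: "nat \<Rightarrow> 'a::field mat \<Rightarrow> 'a mat" where
  "adj q X = mat (dim_col X) (dim_row X) (\<lambda>(i,j). (X $$ (j,i)) ^ q)"

definition hermitian :: "nat \<Rightarrow> 'a::field mat \<Rightarrow> bool" where
  "hermitian q A \<longleftrightarrow> adj q A = A"

definition fixed_field :: "nat \<Rightarrow> 'a::field set" where
  "fixed_field q = {a. a ^ q = a}"

definition col :: "'a::field vec \<Rightarrow> 'a mat" where
  "col x = mat_of_cols (dim_vec x) [x]"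

definition rowc :: "nat \<Rightarrow> 'a::field vec \<Rightarrow> 'a mat" where
  "rowc q x = adj q (col x)"

definition is_leaf :: "nat \<Rightarrow> nat \<Rightarrow> 'a::field mat \<Rightarrow> 'a mat set \<Rightarrow> bool" where
  "is_leaf q n A L \<longleftrightarrow>
     A \<in> carrier_mat n n \<and> hermitian q A \<and> vec_space.rank n A < n \<and>
     (\<exists>x \<in> carrier_vec n. x \<notin> vec_space.col_space n A \<and>
        L = {A + c \<cdot>\<^sub>m (col x * rowc q x) | c. c \<noteq> 0 \<and> c \<in> fixed_field q})"

definition inv_set :: "nat \<Rightarrow> 'a::field mat set \<Rightarrow> 'a mat set" where
  "inv_set n L = {Y. \<exists>X \<in> L. Y \<in> carrier_mat n n \<and> X * Y = 1\<^sub>m n \<and> Y * X = 1\<^sub>m n}"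

definition block_z :: "nat \<Rightarrow> nat \<Rightarrow> 'a::field vec \<Rightarrow> 'a mat" where
  "block_z q n z = four_block_mat (1\<^sub>m (n - 1)) (col z) (rowc q z) (rowc q z * col z)"

end

theory Submission
  imports Defs
begin

text \<open>Since \<open>q\<^sup>2\<close> is a power of the characteristic, so is \<open>q\<close>, and \<open>x \<mapsto> x\<^sup>q\<close> is a field
  automorphism of order 2 whose norm \<open>x \<mapsto> x\<^sup>q\<^sup>+\<^sup>1\<close> maps onto the nonzero elements of the fixed field.
  Hence every hermitian matrix of rank \<open>n - 1\<close> has the form \<open>A = R D R\<^sup>*\<close> with \<open>D = diag(I\<^sub>n\<^sub>-\<^sub>1, 0)\<close>.
  Put \<open>P = R\<^sup>-\<^sup>1\<close>. For \<open>x\<close> outside the column space of \<open>A\<close> the last coordinate \<open>t\<close> of \<open>P x\<close> is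
  nonzero; write \<open>P x = t (-z; 1)\<close>. Then
  \<open>(A + \<lambda> x x\<^sup>*)\<^sup>-\<^sup>1 = P\<^sup>* (B\<^sub>z + \<mu> E) P\<close> with \<open>B\<^sub>z = [[I, z], [z\<^sup>*, z\<^sup>* z]]\<close>, \<open>E\<close> the last
  diagonal matrix unit and \<open>\<mu> = 1 / (\<lambda> t\<^sup>q\<^sup>+\<^sup>1)\<close>. The inverses of a leaf thus lie on the affine line
  \<open>P\<^sup>* B\<^sub>z P + \<mu> P\<^sup>* E P\<close>, and as \<open>B\<^sub>z + \<mu> E\<close> is invertible for \<open>\<mu> \<noteq> 0\<close>, the only matrix of rank
  \<open>n - 1\<close> on it is \<open>P\<^sup>* B\<^sub>z P\<close>. Distinct leaves come from non-proportional \<open>x\<close>, i.e. distinct \<open>z\<close>, and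
  \<open>B\<^sub>z\<^sub>1 - B\<^sub>z\<^sub>2 = [[0, w], [w\<^sup>*, c]]\<close> with \<open>w = z\<^sub>1 - z\<^sub>2 \<noteq> 0\<close> has rank 2.\<close>

section \<open>Finite fields\<close>

lemma of_nat_mult_mem_add_closed:
  fixes T :: "'a::semiring_1 set"
  assumes "0 \<in> T" "\<And>a b. a \<in> T \<Longrightarrow> b \<in> T \<Longrightarrow> a + b \<in> T" "y \<in> T"
  shows "of_nat k * y \<in> T"
  by (induction k) (use assms in \<open>auto simp: distrib_right\<close>)

lemma of_nat_mod_CHAR: "(of_nat (k mod CHAR('a)) :: 'a::semiring_1) = of_nat k"
proof -
  have "(of_nat k :: 'a) = of_nat (k div CHAR('a) * CHAR('a) + k mod CHAR('a))"
    by simp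
  also have "\<dots> = of_nat (k mod CHAR('a))"
    by (simp only: of_nat_add of_nat_mult of_nat_CHAR) simp
  finally show ?thesis ..
qed

lemma mem_add_closed_of_nat_mult:
  fixes T :: "'a::field set"
  assumes "0 \<in> T" "\<And>a b. a \<in> T \<Longrightarrow> b \<in> T \<Longrightarrow> a + b \<in> T"
    and "prime CHAR('a)" "0 < d" "d < CHAR('a)" "of_nat d * x \<in> T"
  shows "x \<in> T"
proof -
  have "coprime d CHAR('a)"
    using assms(3-5) by (metis coprime_commute nat_dvd_not_less prime_imp_coprime_nat)
  then obtain u v where "d * u = CHAR('a) * v + 1"
    using bezout_nat[of d "CHAR('a)"] assms(4) by auto
  then have "(of_nat u * of_nat d :: 'a) = 1"
    by (metis (no_types) add.left_neutral mult.commute mult_zero_left of_nat_1 of_nat_CHAR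
        of_nat_add of_nat_mult)
  then have "x = of_nat u * (of_nat d * x)"
    by (metis mult.assoc mult_1)
  then show ?thesis
    using of_nat_mult_mem_add_closed[OF assms(1,2,6)] by metis
qed

lemma prime_CHAR_finite_field: "prime CHAR('a::{finite,field})"
  using prime_CHAR_semidom finite_imp_CHAR_pos by (metis finite_UNIV)

lemma uminus_mem_add_closed:
  fixes T :: "'a::{finite,field} set"
  assumes "0 \<in> T" "\<And>a b. a \<in> T \<Longrightarrow> b \<in> T \<Longrightarrow> a + b \<in> T" "y \<in> T"
  shows "- y \<in> T"
proof -
  have "1 < CHAR('a)"
    using prime_CHAR_finite_field by (rule prime_gt_1_nat)
  then have "- y = of_nat (CHAR('a) - 1) * y"
    by (simp add: of_nat_diff algebra_simps)
  then show ?thesis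
    using of_nat_mult_mem_add_closed[OF assms] by metis
qed

lemma inj_on_add_closed_translates:
  fixes T :: "'a::{finite,field} set"
  assumes T0: "0 \<in> T" and T_add: "\<And>a b. a \<in> T \<Longrightarrow> b \<in> T \<Longrightarrow> a + b \<in> T" and x: "x \<notin> T"
  shows "inj_on (\<lambda>(t, i). t + of_nat i * x) (T \<times> {..<CHAR('a)})"
proof -
  have eq: "t = s \<and> i = j" if "t \<in> T" "s \<in> T" "j < CHAR('a)" "i \<le> j"
    "t + of_nat i * x = s + of_nat j * x" for t s i j
  proof (rule ccontr)
    assume "\<not> (t = s \<and> i = j)"
    with that have "i < j"
      by (cases "i = j") auto
    have "of_nat (j - i) * x = t + - s"
      using that(4,5) by (simp add: of_nat_diff algebra_simps)
    also have "\<dots> \<in> T"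
      using T_add uminus_mem_add_closed[OF T0 T_add] that(1,2) by blast
    finally have "of_nat (j - i) * x \<in> T" .
    moreover have "0 < j - i" "j - i < CHAR('a)"
      using \<open>i < j\<close> that(3) by auto
    ultimately have "x \<in> T"
      using mem_add_closed_of_nat_mult[OF T0 T_add prime_CHAR_finite_field] by blast
    with x show False ..
  qed
  show ?thesis
    by (rule inj_onI) (clarsimp, metis eq nat_le_linear)
qed

lemma add_closed_extend:
  fixes T :: "'a::{finite,field} set"
  assumes T0: "0 \<in> T" and T_add: "\<And>a b. a \<in> T \<Longrightarrow> b \<in> T \<Longrightarrow> a + b \<in> T" and x: "x \<notin> T"
  obtains T' where "0 \<in> T'" "\<And>a b. a \<in> T' \<Longrightarrow> b \<in> T' \<Longrightarrow> a + b \<in> T'" "insert x T \<subseteq> T'"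
    "card T' = CHAR('a) * card T"
proof
  let ?p = "CHAR('a)"
  let ?f = "\<lambda>(t, i). t + of_nat i * x"
  have p1: "1 < ?p"
    using prime_CHAR_finite_field by (rule prime_gt_1_nat)
  show "0 \<in> ?f ` (T \<times> {..<?p})" "insert x T \<subseteq> ?f ` (T \<times> {..<?p})"
    using T0 p1 by (force intro: image_eqI[of _ _ "(0, 1)"] image_eqI[of _ _ "(_, 0)"])+
  show "a + b \<in> ?f ` (T \<times> {..<?p})" if "a \<in> ?f ` (T \<times> {..<?p})" "b \<in> ?f ` (T \<times> {..<?p})" for a b
  proof -
    from that obtain t i s j where "a = t + of_nat i * x" "t \<in> T" "b = s + of_nat j * x" "s \<in> T"
      by auto
    moreover have "t + of_nat i * x + (s + of_nat j * x) = (t + s) + of_nat ((i + j) mod ?p) * x"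
      by (simp add: of_nat_mod_CHAR algebra_simps)
    ultimately show ?thesis
      using T_add p1 by (force intro: image_eqI[of _ _ "(t + s, (i + j) mod ?p)"])
  qed
  show "card (?f ` (T \<times> {..<?p})) = ?p * card T"
    using inj_on_add_closed_translates[OF assms]
    by (simp add: card_image card_cartesian_product)
qed

lemma card_UNIV_eq_card_add_closed_mult_CHAR_power:
  fixes T :: "'a::{finite,field} set"
  assumes "0 \<in> T" "\<And>a b. a \<in> T \<Longrightarrow> b \<in> T \<Longrightarrow> a + b \<in> T"
  shows "\<exists>k. card (UNIV :: 'a set) = card T * CHAR('a) ^ k"
  using assms
proof (induction "card (UNIV - T)" arbitrary: T rule: less_induct)
  case less
  show ?case
  proof (cases "T = UNIV")
    case False
    then obtain x where "x \<notin> T"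
      by blast
    obtain T' where T': "0 \<in> T'" "\<And>a b. a \<in> T' \<Longrightarrow> b \<in> T' \<Longrightarrow> a + b \<in> T'"
      "insert x T \<subseteq> T'" "card T' = CHAR('a) * card T"
      using add_closed_extend[OF less.prems \<open>x \<notin> T\<close>] by blast
    have "card (UNIV - T') < card (UNIV - T)"
      using T'(3) \<open>x \<notin> T\<close> by (intro psubset_card_mono) auto
    then obtain k where "card (UNIV :: 'a set) = card T' * CHAR('a) ^ k"
      using less.hyps T'(1,2) by blast
    then show ?thesis
      using T'(4) by (intro exI[of _ "Suc k"]) (simp add: ac_simps)
  qed (auto intro: exI[of _ 0])
qed

lemma card_UNIV_eq_CHAR_power: "\<exists>k. card (UNIV :: 'a::{finite,field} set) = CHAR('a) ^ k"
  using card_UNIV_eq_card_add_closed_mult_CHAR_power[of "{0::'a}"] by simp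

lemma power_card_UNIV [simp]: "(x::'a::{finite,field}) ^ card (UNIV :: 'a set) = x"
proof (cases "x = 0")
  case False
  have "x * (\<Prod>y\<in>UNIV-{0}. x * y) = x * x ^ (card (UNIV :: 'a set) - 1) * \<Prod>(UNIV-{0})"
    by (simp add: prod.distrib mult_ac)
  also have "x * x ^ (card (UNIV :: 'a set) - 1) = x ^ card (UNIV :: 'a set)"
    using finite_UNIV_card_ge_0[where ?'a = 'a] by (simp flip: power_Suc)
  also have "(\<Prod>y\<in>UNIV-{0}. x * y) = (\<Prod>y\<in>UNIV-{0}. y)"
    by (rule prod.reindex_bij_witness[of _ "\<lambda>y. y / x" "\<lambda>y. x * y"]) (use False in auto)
  finally show ?thesis
    by simp
qed (simp add: finite_UNIV_card_ge_0)

lemma card_roots_power_plus_poly_le: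
  fixes p :: "'a::field poly"
  assumes "degree p < k"
  shows "card {x. x ^ k + poly p x = 0} \<le> k"
proof -
  have deg: "degree (monom 1 k + p) = k"
    using assms by (simp add: degree_add_eq_left degree_monom_eq)
  then have "monom 1 k + p \<noteq> 0"
    using assms by auto
  then show ?thesis
    using card_poly_roots_bound[of "monom 1 k + p"] deg by (simp add: poly_monom)
qed

section \<open>Conjugate transposes, *-congruence and leaves\<close>

lemma adj_dims [simp]: "dim_row (adj q X) = dim_col X" "dim_col (adj q X) = dim_row X"
  unfolding adj_def by auto

lemma adj_index [simp]: "i < dim_col X \<Longrightarrow> j < dim_row X \<Longrightarrow> adj q X $$ (i, j) = X $$ (j, i) ^ q"
  unfolding adj_def by auto

lemma adj_carrier [simp]: "X \<in> carrier_mat n m \<Longrightarrow> adj q X \<in> carrier_mat m n"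
  unfolding carrier_mat_def by auto

lemma adj_eq_map_transpose: "adj q X = map_mat (\<lambda>x. x ^ q) (transpose_mat X)"
  by (rule eq_matI) auto

lemma adj_four_block_mat:
  assumes "A \<in> carrier_mat n1 m1" "B \<in> carrier_mat n1 m2" "C \<in> carrier_mat n2 m1" "D \<in> carrier_mat n2 m2"
  shows "adj q (four_block_mat A B C D) = four_block_mat (adj q A) (adj q C) (adj q B) (adj q D)"
  by (rule eq_matI) (use assms in auto)

lemma hermitian_index:
  "hermitian q A \<Longrightarrow> A \<in> carrier_mat n n \<Longrightarrow> i < n \<Longrightarrow> j < n \<Longrightarrow> A $$ (j, i) = A $$ (i, j) ^ q"
  unfolding hermitian_def by (metis adj_index carrier_matD)

lemma star_congr_carrier [simp]:
  "Q \<in> carrier_mat n k \<Longrightarrow> M \<in> carrier_mat k k \<Longrightarrow> Q * M * adj q Q \<in> carrier_mat n n"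
  by (metis adj_carrier mult_carrier_mat)

lemma star_congr_index:
  assumes "P \<in> carrier_mat nr n" "A \<in> carrier_mat n n" "R \<in> carrier_mat nc n" "i < nr" "j < nc"
  shows "(P * A * adj q R) $$ (i, j) = (\<Sum>k<n. \<Sum>l<n. P $$ (i, k) * A $$ (k, l) * R $$ (j, l) ^ q)"
proof -
  have "(P * A * adj q R) $$ (i, j) = (\<Sum>l<n. (\<Sum>k<n. P $$ (i, k) * A $$ (k, l)) * R $$ (j, l) ^ q)"
    using assms by (simp add: scalar_prod_def lessThan_atLeast0)
  also have "\<dots> = (\<Sum>k<n. \<Sum>l<n. P $$ (i, k) * A $$ (k, l) * R $$ (j, l) ^ q)"
    by (simp add: sum_distrib_right) (rule sum.swap)
  finally show ?thesis .
qed

lemma star_congr_row_diag_index: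
  assumes "P \<in> carrier_mat n n" "A \<in> carrier_mat n n" "i < n" "\<And>k. k < n \<Longrightarrow> P $$ (i, k) = r k"
  shows "(P * A * adj q P) $$ (i, i) = (\<Sum>k<n. \<Sum>l<n. r k * A $$ (k, l) * r l ^ q)"
  using star_congr_index[OF assms(1,2,1,3,3)] assms(4) by simp

lemma rank_le_card_of_sum_products:
  fixes A :: "'a::field mat"
  assumes "finite K" "A \<in> carrier_mat n nc"
    and "\<And>i j. i < n \<Longrightarrow> j < nc \<Longrightarrow> A $$ (i, j) = (\<Sum>a\<in>K. f a i * g a j)"
  shows "vec_space.rank n A \<le> card K"
  using assms
proof (induction K arbitrary: A rule: finite_induct)
  case empty
  then have "A = 0\<^sub>m n nc"
    by (intro eq_matI) auto
  then show ?case
    using vec_space.rank_0I by simp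
next
  case (insert a K)
  define A1 where "A1 = mat n nc (\<lambda>(i, j). f a i * g a j)"
  define A2 where "A2 = mat n nc (\<lambda>(i, j). \<Sum>b\<in>K. f b i * g b j)"
  have "A = A1 + A2"
    using insert unfolding A1_def A2_def by (intro eq_matI) auto
  moreover have "vec_space.rank n A1 \<le> 1"
    by (rule vec_space.rank_le_1_product_entries[of A1 n nc "f a" "g a"]) (auto simp: A1_def)
  moreover have "vec_space.rank n A2 \<le> card K"
    by (rule insert.IH) (auto simp: A2_def)
  moreover have "vec_space.rank n (A1 + A2) \<le> vec_space.rank n A1 + vec_space.rank n A2"
    by (rule vec_space.rank_subadditive) (auto simp: A1_def A2_def)
  ultimately show ?case
    using insert by simp
qed

lemma rank_star_congr_le:
  fixes Q :: "'a::field mat"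
  assumes "Q \<in> carrier_mat n n" "Z \<in> carrier_mat n n" "finite K"
    and "\<And>k l. k < n \<Longrightarrow> l < n \<Longrightarrow> Z $$ (k, l) = (\<Sum>a\<in>K. f a k * g a l)"
  shows "vec_space.rank n (Q * Z * adj q Q) \<le> card K"
proof (rule rank_le_card_of_sum_products[OF assms(3), of _ n n
      "\<lambda>a i. \<Sum>k<n. Q $$ (i, k) * f a k" "\<lambda>a j. \<Sum>l<n. g a l * Q $$ (j, l) ^ q"])
  fix i j assume ij: "i < n" "j < n"
  have "(Q * Z * adj q Q) $$ (i, j) = (\<Sum>k<n. \<Sum>l<n. \<Sum>a\<in>K. (Q $$ (i, k) * f a k) * (g a l * Q $$ (j, l) ^ q))"
    using star_congr_index[OF assms(1,2,1) ij] assms(4)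
    by (simp add: sum_distrib_left sum_distrib_right ac_simps)
  also have "\<dots> = (\<Sum>a\<in>K. \<Sum>k<n. \<Sum>l<n. (Q $$ (i, k) * f a k) * (g a l * Q $$ (j, l) ^ q))"
    by (subst sum.swap) (simp add: sum.swap[of _ "{..<n}" K])
  also have "\<dots> = (\<Sum>a\<in>K. (\<Sum>k<n. Q $$ (i, k) * f a k) * (\<Sum>l<n. g a l * Q $$ (j, l) ^ q))"
    by (simp add: sum_product)
  finally show "(Q * Z * adj q Q) $$ (i, j) = \<dots>" .
qed (use assms in auto)

definition star_congruent :: "nat \<Rightarrow> nat \<Rightarrow> 'a::field mat \<Rightarrow> 'a mat \<Rightarrow> bool" where
  "star_congruent q n A B \<longleftrightarrow> (\<exists>P \<in> carrier_mat n n. det P \<noteq> 0 \<and> B = P * A * adj q P)"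

lemma star_congruentI: "P \<in> carrier_mat n n \<Longrightarrow> det P \<noteq> 0 \<Longrightarrow> star_congruent q n A (P * A * adj q P)"
  unfolding star_congruent_def by blast

definition diag_ones :: "nat \<Rightarrow> nat \<Rightarrow> 'a::zero_neq_one mat" where
  "diag_ones n k = mat_diag n (\<lambda>i. if i < k then 1 else 0)"

lemma diag_ones_carrier [simp]: "diag_ones n k \<in> carrier_mat n n"
  unfolding diag_ones_def by simp

lemma diag_ones_dims [simp]: "dim_row (diag_ones n k) = n" "dim_col (diag_ones n k) = n"
  unfolding diag_ones_def mat_diag_def by auto

lemma diag_ones_index:
  "i < n \<Longrightarrow> j < n \<Longrightarrow> diag_ones n k $$ (i, j) = (if i = j \<and> i < k then 1 else 0)"
  unfolding diag_ones_def mat_diag_def by simp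

lemma diag_ones_full: "diag_ones n n = 1\<^sub>m n"
  by (rule eq_matI) (auto simp: diag_ones_index)

lemma four_block_one_diag_ones:
  "four_block_mat (1\<^sub>m 1) (0\<^sub>m 1 m) (0\<^sub>m m 1) (diag_ones m k) = diag_ones (Suc m) (Suc k)"
  by (rule eq_matI) (auto simp: diag_ones_index)

lemma inverse_mat_exists:
  assumes "(P :: 'a::field mat) \<in> carrier_mat n n" "det P \<noteq> 0"
  obtains R where "R \<in> carrier_mat n n" "P * R = 1\<^sub>m n" "R * P = 1\<^sub>m n"
  using det_non_zero_imp_unit[OF assms, of "()"] that unfolding Units_def ring_mat_def by auto

lemma det_ne_zero_of_inverse:
  assumes "(P :: 'a::field mat) \<in> carrier_mat n n" "R \<in> carrier_mat n n" "P * R = 1\<^sub>m n"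
  shows "det P \<noteq> 0"
  using det_mult[OF assms(1,2)] assms(3) by auto

lemma col_dims [simp]: "dim_row (col v) = dim_vec v" "dim_col (col v) = 1"
  unfolding col_def by auto

lemma col_index [simp]: "i < dim_vec v \<Longrightarrow> col v $$ (i, 0) = v $ i"
  unfolding col_def mat_of_cols_def by auto

lemma rowc_dims [simp]: "dim_row (rowc q v) = 1" "dim_col (rowc q v) = dim_vec v"
  unfolding rowc_def by auto

lemma rowc_index [simp]: "j < dim_vec v \<Longrightarrow> rowc q v $$ (0, j) = (v $ j) ^ q"
  unfolding rowc_def by simp

lemma outer_carrier [simp]:
  "v \<in> carrier_vec n \<Longrightarrow> w \<in> carrier_vec k \<Longrightarrow> col v * rowc q w \<in> carrier_mat n k"
  unfolding carrier_mat_def carrier_vec_def by simp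

lemma outer_index:
  "i < dim_vec v \<Longrightarrow> j < dim_vec w \<Longrightarrow> (col v * rowc q w) $$ (i, j) = v $ i * (w $ j) ^ q"
  by (simp add: scalar_prod_def)

lemma col_mult_mat_vec: "M \<in> carrier_mat n k \<Longrightarrow> v \<in> carrier_vec k \<Longrightarrow> col (M *\<^sub>v v) = M * col v"
  by (rule eq_matI) (auto simp: scalar_prod_def)

lemma outer_smult: "col (s \<cdot>\<^sub>v x) * rowc q (s \<cdot>\<^sub>v x) = (s * s ^ q) \<cdot>\<^sub>m (col x * rowc q x)"
proof (rule eq_matI)
  fix i j assume "i < dim_row ((s * s ^ q) \<cdot>\<^sub>m (col x * rowc q x))"
    "j < dim_col ((s * s ^ q) \<cdot>\<^sub>m (col x * rowc q x))"
  then show "(col (s \<cdot>\<^sub>v x) * rowc q (s \<cdot>\<^sub>v x)) $$ (i, j) = ((s * s ^ q) \<cdot>\<^sub>m (col x * rowc q x)) $$ (i, j)"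
    using outer_index[of i "s \<cdot>\<^sub>v x" j "s \<cdot>\<^sub>v x" q] outer_index[of i x j x q]
    by (simp add: power_mult_distrib ac_simps del: index_mult_mat(1))
qed auto

definition corner_unit :: "nat \<Rightarrow> 'a::zero_neq_one mat" where
  "corner_unit n = mat_diag n (\<lambda>i. if i = n - 1 then 1 else 0)"

lemma corner_unit_carrier [simp]: "corner_unit n \<in> carrier_mat n n"
  unfolding corner_unit_def by simp

lemma corner_unit_dims [simp]: "dim_row (corner_unit n) = n" "dim_col (corner_unit n) = n"
  unfolding corner_unit_def mat_diag_def by auto

lemma corner_unit_index:
  "i < n \<Longrightarrow> j < n \<Longrightarrow> corner_unit n $$ (i, j) = (if i = n - 1 \<and> j = n - 1 then 1 else 0)"
  unfolding corner_unit_def mat_diag_def by auto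

lemma block_z_dims [simp]: "dim_row (block_z q (Suc m) z) = Suc m" "dim_col (block_z q (Suc m) z) = Suc m"
  unfolding block_z_def by simp_all

lemma block_z_carrier [simp]: "block_z q (Suc m) z \<in> carrier_mat (Suc m) (Suc m)"
  by (rule carrier_matI) simp_all

lemma block_z_index:
  assumes "(z :: 'a::field vec) \<in> carrier_vec m" "i < Suc m" "j < Suc m"
  shows "block_z q (Suc m) z $$ (i, j) =
    (if i < m then (if j < m then (if i = j then 1 else 0) else z $ i)
     else (if j < m then (z $ j) ^ q else (\<Sum>k<m. (z $ k) ^ q * z $ k)))"
proof -
  have "dim_vec z = m"
    using assms(1) by simp
  then show ?thesis
    using assms unfolding block_z_def by (auto simp: scalar_prod_def lessThan_atLeast0)
qed

text \<open>For \<open>y\<^sub>m \<noteq> 0\<close> we have \<open>y = y\<^sub>m (-z; 1)\<close> with \<open>z = dehom m y\<close>.\<close>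
definition dehom :: "nat \<Rightarrow> 'a::field vec \<Rightarrow> 'a vec" where
  "dehom m y = vec m (\<lambda>i. - y $ i / y $ m)"

lemma dehom_carrier [simp]: "dehom m y \<in> carrier_vec m"
  unfolding dehom_def by simp

lemma dehom_index [simp]: "i < m \<Longrightarrow> dehom m y $ i = - y $ i / y $ m"
  unfolding dehom_def by simp

lemma smult_of_dehom_eq:
  assumes y: "y1 \<in> carrier_vec (Suc m)" "y2 \<in> carrier_vec (Suc m)" "y1 $ m \<noteq> 0" "y2 $ m \<noteq> 0"
    and eq: "dehom m y1 = dehom m y2"
  shows "y2 = (y2 $ m / y1 $ m) \<cdot>\<^sub>v y1"
proof (rule eq_vecI)
  fix k assume "k < dim_vec ((y2 $ m / y1 $ m) \<cdot>\<^sub>v y1)"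
  then have k: "k < Suc m"
    using y(1) by simp
  show "y2 $ k = ((y2 $ m / y1 $ m) \<cdot>\<^sub>v y1) $ k"
  proof (cases "k = m")
    case False
    with k have "- y1 $ k / y1 $ m = - y2 $ k / y2 $ m"
      using arg_cong[OF eq, of "\<lambda>v. v $ k"] by simp
    then show ?thesis
      using k y by (simp add: field_simps)
  qed (use y in simp)
qed (use y in simp)

lemma dehom_lift: "z \<in> carrier_vec m \<Longrightarrow> dehom m (vec (Suc m) (\<lambda>i. if i < m then - z $ i else 1)) = z"
  by (rule eq_vecI) auto

lemma diag_ones_mult_vec_last_zero:
  assumes "(y :: 'a::field vec) \<in> carrier_vec (Suc m)" "y $ m = 0"
  shows "diag_ones (Suc m) m *\<^sub>v y = y"
proof (rule eq_vecI)
  fix i assume "i < dim_vec y"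
  then have i: "i < Suc m"
    using assms by simp
  have "(diag_ones (Suc m) m *\<^sub>v y) $ i = (\<Sum>j<Suc m. (if i = j \<and> i < m then 1 else 0) * y $ j)"
    using i assms by (simp add: scalar_prod_def lessThan_atLeast0 diag_ones_index)
  also have "\<dots> = y $ i"
    using i assms by (auto simp: if_distrib[of "\<lambda>x. x * _"] less_Suc_eq cong: if_cong)
  finally show "(diag_ones (Suc m) m *\<^sub>v y) $ i = y $ i" .
qed (use assms in auto)

definition leaf :: "nat \<Rightarrow> 'a::field mat \<Rightarrow> 'a vec \<Rightarrow> 'a mat set" where
  "leaf q A x = {A + c \<cdot>\<^sub>m (col x * rowc q x) | c. c \<noteq> 0 \<and> c \<in> fixed_field q}"

lemma is_leaf_iff:
  "is_leaf q n A L \<longleftrightarrow> A \<in> carrier_mat n n \<and> hermitian q A \<and> vec_space.rank n A < n \<and>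
     (\<exists>x \<in> carrier_vec n. x \<notin> vec_space.col_space n A \<and> L = leaf q A x)"
  by (simp add: is_leaf_def leaf_def)

lemma leaf_eq_of_outer_eq_smult:
  assumes \<nu>: "\<nu> \<noteq> 0" "\<nu> \<in> fixed_field q" and outer: "col y * rowc q y = \<nu> \<cdot>\<^sub>m (col x * rowc q x)"
  shows "leaf q A y = leaf q A x"
proof -
  have eq: "A + c \<cdot>\<^sub>m (col y * rowc q y) = A + (c * \<nu>) \<cdot>\<^sub>m (col x * rowc q x)" for c
    unfolding outer by (rule arg_cong[of _ _ "\<lambda>M. A + M"], rule eq_matI) auto
  have fixed: "c * \<nu> \<in> fixed_field q" "c / \<nu> \<in> fixed_field q" if "c \<in> fixed_field q" for c
    using that \<nu> unfolding fixed_field_def by (simp_all add: power_mult_distrib power_divide)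
  show ?thesis
    unfolding leaf_def
  proof (intro equalityI subsetI)
    fix X assume "X \<in> {A + c \<cdot>\<^sub>m (col y * rowc q y) |c. c \<noteq> 0 \<and> c \<in> fixed_field q}"
    then obtain c where "X = A + (c * \<nu>) \<cdot>\<^sub>m (col x * rowc q x)" "c * \<nu> \<noteq> 0" "c * \<nu> \<in> fixed_field q"
      using eq fixed \<nu> by auto
    then show "X \<in> {A + c \<cdot>\<^sub>m (col x * rowc q x) |c. c \<noteq> 0 \<and> c \<in> fixed_field q}"
      by blast
  next
    fix X assume "X \<in> {A + c \<cdot>\<^sub>m (col x * rowc q x) |c. c \<noteq> 0 \<and> c \<in> fixed_field q}"
    then obtain c where "X = A + (c / \<nu>) \<cdot>\<^sub>m (col y * rowc q y)" "c / \<nu> \<noteq> 0" "c / \<nu> \<in> fixed_field q"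
      using eq fixed \<nu> by auto
    then show "X \<in> {A + c \<cdot>\<^sub>m (col y * rowc q y) |c. c \<noteq> 0 \<and> c \<in> fixed_field q}"
      by blast
  qed
qed

lemma inv_set_memI:
  assumes "X \<in> L" "(X :: 'a::field mat) \<in> carrier_mat n n" "Y \<in> carrier_mat n n" "X * Y = 1\<^sub>m n"
  shows "Y \<in> inv_set n L"
  unfolding inv_set_def using assms mat_mult_left_right_inverse[OF assms(2-4)] by blast

lemma nonzero_mat_entry:
  assumes "A \<in> carrier_mat n m" "A \<noteq> 0\<^sub>m n m"
  obtains i j where "i < n" "j < m" "A $$ (i, j) \<noteq> 0"
proof -
  have "\<exists>i<n. \<exists>j<m. A $$ (i, j) \<noteq> 0"
  proof (rule ccontr)
    assume "\<not> (\<exists>i<n. \<exists>j<m. A $$ (i, j) \<noteq> 0)"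
    then have "A = 0\<^sub>m n m"
      using assms(1) by (intro eq_matI) auto
    with assms(2) show False ..
  qed
  then show ?thesis
    using that by blast
qed

lemma star_congr_add:
  assumes "Q \<in> carrier_mat n n" "B \<in> carrier_mat n n" "C \<in> carrier_mat n n"
  shows "Q * (B + C) * adj q Q = Q * B * adj q Q + Q * C * adj q Q"
  using assms by (simp add: mult_add_distrib_mat[of Q n n] add_mult_distrib_mat[of _ n n _ _ n])

lemma star_congr_minus:
  fixes Q :: "'a::field mat"
  assumes "Q \<in> carrier_mat n n" "B \<in> carrier_mat n n" "C \<in> carrier_mat n n"
  shows "Q * (B - C) * adj q Q = Q * B * adj q Q - Q * C * adj q Q"
  using assms by (simp add: mult_minus_distrib_mat[of Q n n] minus_mult_distrib_mat[of _ n n _ _ n])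

lemma star_congr_smult:
  assumes "Q \<in> carrier_mat n n" "B \<in> carrier_mat n n"
  shows "Q * (c \<cdot>\<^sub>m B) * adj q Q = c \<cdot>\<^sub>m (Q * B * adj q Q)"
  using assms by (simp add: mult_smult_distrib[of Q n n] mult_smult_assoc_mat[of _ n n _ n])

lemma eq_on_line_of_two_points:
  fixes N0 G N H :: "'a::field mat"
  assumes carrier: "N0 \<in> carrier_mat n n" "G \<in> carrier_mat n n" "N \<in> carrier_mat n n" "H \<in> carrier_mat n n"
    and G: "G \<noteq> 0\<^sub>m n n" and \<mu>: "\<mu>1 \<noteq> \<mu>2"
    and e1: "N0 + \<mu>1 \<cdot>\<^sub>m G = N + c1 \<cdot>\<^sub>m H" and e2: "N0 + \<mu>2 \<cdot>\<^sub>m G = N + c2 \<cdot>\<^sub>m H"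
  obtains \<gamma> where "N = N0 + \<gamma> \<cdot>\<^sub>m G"
proof -
  have E1: "N0 $$ (i, j) + \<mu>1 * G $$ (i, j) = N $$ (i, j) + c1 * H $$ (i, j)" if "i < n" "j < n" for i j
    using arg_cong[OF e1, of "\<lambda>M. M $$ (i, j)"] that carrier by simp
  have E2: "N0 $$ (i, j) + \<mu>2 * G $$ (i, j) = N $$ (i, j) + c2 * H $$ (i, j)" if "i < n" "j < n" for i j
    using arg_cong[OF e2, of "\<lambda>M. M $$ (i, j)"] that carrier by simp
  obtain i0 j0 where ij0: "i0 < n" "j0 < n" "G $$ (i0, j0) \<noteq> 0"
    using nonzero_mat_entry[OF carrier(2) G] by blast
  have c12: "c1 \<noteq> c2"
  proof
    assume "c1 = c2"
    then have "N0 $$ (i0, j0) + \<mu>1 * G $$ (i0, j0) = N0 $$ (i0, j0) + \<mu>2 * G $$ (i0, j0)"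
      using E1[OF ij0(1,2)] E2[OF ij0(1,2)] by simp
    then have "\<mu>1 * G $$ (i0, j0) = \<mu>2 * G $$ (i0, j0)"
      by (rule add_left_imp_eq)
    with \<mu> ij0(3) show False
      by simp
  qed
  define \<gamma> where "\<gamma> = \<mu>1 - c1 * (\<mu>1 - \<mu>2) / (c1 - c2)"
  have "N = N0 + \<gamma> \<cdot>\<^sub>m G"
  proof (rule eq_matI)
    fix i j assume "i < dim_row (N0 + \<gamma> \<cdot>\<^sub>m G)" "j < dim_col (N0 + \<gamma> \<cdot>\<^sub>m G)"
    then have ij: "i < n" "j < n"
      using carrier by auto
    have "(\<mu>1 - \<mu>2) * G $$ (i, j) = (N0 $$ (i, j) + \<mu>1 * G $$ (i, j)) - (N0 $$ (i, j) + \<mu>2 * G $$ (i, j))"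
      by (simp add: algebra_simps)
    also have "\<dots> = (N $$ (i, j) + c1 * H $$ (i, j)) - (N $$ (i, j) + c2 * H $$ (i, j))"
      unfolding E1[OF ij] E2[OF ij] ..
    also have "\<dots> = (c1 - c2) * H $$ (i, j)"
      by (simp add: algebra_simps)
    finally have "(\<mu>1 - \<mu>2) * G $$ (i, j) = (c1 - c2) * H $$ (i, j)" .
    then have H: "H $$ (i, j) = (\<mu>1 - \<mu>2) * G $$ (i, j) / (c1 - c2)"
      using c12 by (simp add: field_simps)
    have "N $$ (i, j) = N0 $$ (i, j) + \<mu>1 * G $$ (i, j) - c1 * H $$ (i, j)"
      using E1[OF ij] by (simp add: algebra_simps)
    also have "\<dots> = N0 $$ (i, j) + \<gamma> * G $$ (i, j)"
      unfolding H \<gamma>_def using c12 by (simp add: field_simps)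
    finally show "N $$ (i, j) = (N0 + \<gamma> \<cdot>\<^sub>m G) $$ (i, j)"
      using ij carrier by simp
  qed (use carrier in auto)
  then show ?thesis
    using that by blast
qed

definition normal_frame :: "nat \<Rightarrow> nat \<Rightarrow> 'a::field mat \<Rightarrow> 'a mat \<Rightarrow> 'a mat \<Rightarrow> bool" where
  "normal_frame q m P R A \<longleftrightarrow> P \<in> carrier_mat (Suc m) (Suc m) \<and> R \<in> carrier_mat (Suc m) (Suc m) \<and>
     P * R = 1\<^sub>m (Suc m) \<and> R * P = 1\<^sub>m (Suc m) \<and> A = R * diag_ones (Suc m) m * adj q R"

lemma normal_frameD:
  assumes "normal_frame q m P R A"
  shows "P \<in> carrier_mat (Suc m) (Suc m)" "R \<in> carrier_mat (Suc m) (Suc m)"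
    "P * R = 1\<^sub>m (Suc m)" "R * P = 1\<^sub>m (Suc m)" "A = R * diag_ones (Suc m) m * adj q R"
  using assms unfolding normal_frame_def by auto

lemma invertible_mat_of_det:
  assumes "(Q :: 'a::field mat) \<in> carrier_mat n n" "det Q \<noteq> 0"
  shows "invertible_mat Q"
proof -
  obtain R where "R \<in> carrier_mat n n" "Q * R = 1\<^sub>m n" "R * Q = 1\<^sub>m n"
    using inverse_mat_exists[OF assms] by blast
  then show ?thesis
    using assms(1) unfolding invertible_mat_def inverts_mat_def by auto
qed

lemma four_block_corner_one_row_elim:
  fixes b :: "'a::comm_ring_1 mat"
  assumes b: "b \<in> carrier_mat 1 m" and b': "b' \<in> carrier_mat m 1" and D: "D \<in> carrier_mat m m"
  shows "four_block_mat (1\<^sub>m 1) (0\<^sub>m 1 m) (- b') (1\<^sub>m m) * four_block_mat (1\<^sub>m 1) b b' D =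
    four_block_mat (1\<^sub>m 1) b (0\<^sub>m m 1) (D - b' * b)"
proof -
  have "four_block_mat (1\<^sub>m 1) (0\<^sub>m 1 m) (- b') (1\<^sub>m m) * four_block_mat (1\<^sub>m 1) b b' D =
      four_block_mat (1\<^sub>m 1 * 1\<^sub>m 1 + 0\<^sub>m 1 m * b') (1\<^sub>m 1 * b + 0\<^sub>m 1 m * D)
        (- b' * 1\<^sub>m 1 + 1\<^sub>m m * b') (- b' * b + 1\<^sub>m m * D)"
    by (rule mult_four_block_mat) (use b b' D in auto)
  also have "\<dots> = four_block_mat (1\<^sub>m 1) b (0\<^sub>m m 1) (D - b' * b)"
  proof (rule cong_four_block_mat)
    show "1\<^sub>m 1 * 1\<^sub>m 1 + 0\<^sub>m 1 m * b' = 1\<^sub>m 1" "1\<^sub>m 1 * b + 0\<^sub>m 1 m * D = b"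
      using b b' D by simp_all
    show "- b' * 1\<^sub>m 1 + 1\<^sub>m m * b' = 0\<^sub>m m 1"
      using b' by (intro eq_matI) auto
    show "- b' * b + 1\<^sub>m m * D = D - b' * b"
      using b b' D by (intro eq_matI) auto
  qed
  finally show ?thesis .
qed

lemma four_block_corner_one_col_elim:
  fixes b :: "'a::comm_ring_1 mat"
  assumes b: "b \<in> carrier_mat 1 m" and C: "C \<in> carrier_mat m m"
  shows "four_block_mat (1\<^sub>m 1) b (0\<^sub>m m 1) C * four_block_mat (1\<^sub>m 1) (- b) (0\<^sub>m m 1) (1\<^sub>m m) =
    four_block_mat (1\<^sub>m 1) (0\<^sub>m 1 m) (0\<^sub>m m 1) C"
proof -
  have "four_block_mat (1\<^sub>m 1) b (0\<^sub>m m 1) C * four_block_mat (1\<^sub>m 1) (- b) (0\<^sub>m m 1) (1\<^sub>m m) =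
      four_block_mat (1\<^sub>m 1 * 1\<^sub>m 1 + b * 0\<^sub>m m 1) (1\<^sub>m 1 * - b + b * 1\<^sub>m m)
        (0\<^sub>m m 1 * 1\<^sub>m 1 + C * 0\<^sub>m m 1) (0\<^sub>m m 1 * - b + C * 1\<^sub>m m)"
    by (rule mult_four_block_mat) (use b C in auto)
  also have "\<dots> = four_block_mat (1\<^sub>m 1) (0\<^sub>m 1 m) (0\<^sub>m m 1) C"
  proof (rule cong_four_block_mat)
    show "1\<^sub>m 1 * 1\<^sub>m 1 + b * 0\<^sub>m m 1 = 1\<^sub>m 1" "0\<^sub>m m 1 * 1\<^sub>m 1 + C * 0\<^sub>m m 1 = 0\<^sub>m m 1"
      using b C by simp_all
    show "1\<^sub>m 1 * - b + b * 1\<^sub>m m = 0\<^sub>m 1 m"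
      using b by (intro eq_matI) auto
    show "0\<^sub>m m 1 * - b + C * 1\<^sub>m m = C"
      using b C by (intro eq_matI) auto
  qed
  finally show ?thesis .
qed

section \<open>Hermitian matrices over the field with \<open>q\<^sup>2\<close> elements\<close>

context
  fixes q :: nat
  assumes card_UNIV: "card (UNIV :: 'a::{finite,field} set) = q ^ 2"
begin

lemma two_le_q: "2 \<le> q"
proof (rule ccontr)
  assume "\<not> 2 \<le> q"
  then have "q ^ 2 \<le> 1 ^ 2"
    by (intro power_mono) auto
  moreover have "card {0::'a, 1} \<le> card (UNIV :: 'a set)"
    by (rule card_mono) auto
  ultimately show False
    using card_UNIV by simp
qed

interpretation conj: field_hom "\<lambda>x::'a. x ^ q"
proof
  obtain k where k: "card (UNIV :: 'a set) = CHAR('a) ^ k"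
    using card_UNIV_eq_CHAR_power by blast
  note p = prime_CHAR_finite_field[where 'a = 'a]
  have "q dvd CHAR('a) ^ k"
    using k card_UNIV by (metis dvd_triv_left power2_eq_square)
  then obtain i where "q = CHAR('a) ^ i"
    using divides_primepow_nat[OF p] by blast
  then show "(x + y) ^ q = x ^ q + y ^ q" for x y :: 'a
    using freshmans_dream'[OF p] by blast
qed (use two_le_q in \<open>simp_all add: power_mult_distrib\<close>)

lemma power_q_power_q [simp]: "((x::'a) ^ q) ^ q = x"
  using power_card_UNIV[of x] card_UNIV by (simp add: power_mult[symmetric] power2_eq_square)

lemma card_nonzero_fixed_field_le: "card (fixed_field q - {0::'a}) \<le> q - 1"
proof -
  have "fixed_field q = {x::'a. x ^ q + poly [:0, -1:] x = 0}"
    unfolding fixed_field_def by auto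
  moreover have "degree [:0, -1::'a:] < q"
    using two_le_q by simp
  ultimately have "card (fixed_field q :: 'a set) \<le> q"
    using card_roots_power_plus_poly_le by metis
  moreover have "(0::'a) \<in> fixed_field q"
    unfolding fixed_field_def by simp
  ultimately show ?thesis
    by (simp add: card_Diff_singleton)
qed

lemma card_norm_image_ge: "q - 1 \<le> card ((\<lambda>x::'a. x ^ q * x) ` (UNIV - {0}))"
proof -
  let ?N = "\<lambda>x::'a. x ^ q * x"
  let ?S = "UNIV - {0::'a}"
  have fibre: "card ({x. x ^ Suc q = a} \<inter> ?S) \<le> Suc q" for a :: 'a
  proof -
    have "card ({x. x ^ Suc q = a} \<inter> ?S) \<le> card {x::'a. x ^ Suc q + poly [:-a:] x = 0}"
      by (rule card_mono) auto
    also have "\<dots> \<le> Suc q"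
      by (rule card_roots_power_plus_poly_le) simp
    finally show ?thesis .
  qed
  have cover: "?S = (\<Union>a \<in> ?N ` ?S. {x. x ^ Suc q = a} \<inter> ?S)"
    by (auto simp: mult.commute)
  have "(q - 1) * Suc q = card ?S"
    using card_UNIV two_le_q by (cases q) (auto simp: card_Diff_singleton power2_eq_square)
  also have "\<dots> = card (\<Union>a \<in> ?N ` ?S. {x. x ^ Suc q = a} \<inter> ?S)"
    using cover by (rule arg_cong)
  also have "\<dots> \<le> (\<Sum>a \<in> ?N ` ?S. card ({x. x ^ Suc q = a} \<inter> ?S))"
    by (rule card_UN_le) simp
  also have "\<dots> \<le> (\<Sum>a \<in> ?N ` ?S. Suc q)"
    by (rule sum_mono) (rule fibre)
  finally have "(q - 1) * Suc q \<le> card (?N ` ?S) * Suc q"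
    by simp
  then show ?thesis
    by (simp only: mult_le_cancel2)
qed

lemma nonzero_fixed_field_eq_norm_image: "fixed_field q - {0} = (\<lambda>x::'a. x ^ q * x) ` (UNIV - {0})"
proof (rule card_seteq[symmetric])
  show "(\<lambda>x::'a. x ^ q * x) ` (UNIV - {0}) \<subseteq> fixed_field q - {0}"
    by (auto simp: fixed_field_def power_mult_distrib mult.commute)
  show "card (fixed_field q - {0::'a}) \<le> card ((\<lambda>x::'a. x ^ q * x) ` (UNIV - {0}))"
    using card_nonzero_fixed_field_le card_norm_image_ge by linarith
qed simp

lemma card_nonzero_fixed_field: "card (fixed_field q - {0::'a}) = q - 1"
  by (metis card_nonzero_fixed_field_le card_norm_image_ge nonzero_fixed_field_eq_norm_image le_antisym)

lemma norm_surj: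
  assumes "a \<in> fixed_field q" "a \<noteq> 0"
  obtains c :: 'a where "c \<noteq> 0" "c ^ q * c = a"
proof -
  have "a \<in> (\<lambda>x::'a. x ^ q * x) ` (UNIV - {0})"
    using assms nonzero_fixed_field_eq_norm_image by blast
  then show ?thesis
    using that by blast
qed

lemma trace_nonzero: "\<exists>y::'a. y ^ q + y \<noteq> 0"
proof (rule ccontr)
  assume "\<nexists>y::'a. y ^ q + y \<noteq> 0"
  then have "{x::'a. x ^ q + poly [:0, 1:] x = 0} = UNIV"
    by auto
  moreover have "card {x::'a. x ^ q + poly [:0, 1:] x = 0} \<le> q"
    by (rule card_roots_power_plus_poly_le) (use two_le_q in simp)
  moreover have "q < q ^ 2"
    using two_le_q by (simp add: power2_eq_square)
  ultimately show False
    using card_UNIV by simp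
qed

lemma adj_adj [simp]: "adj q (adj q X) = (X :: 'a mat)"
  by (rule eq_matI) auto

lemma adj_mult:
  assumes "(A :: 'a mat) \<in> carrier_mat n k" "B \<in> carrier_mat k m"
  shows "adj q (A * B) = adj q B * adj q A"
proof (rule eq_matI)
  fix i j assume "i < dim_row (adj q B * adj q A)" "j < dim_col (adj q B * adj q A)"
  with assms show "adj q (A * B) $$ (i, j) = (adj q B * adj q A) $$ (i, j)"
    by (simp add: scalar_prod_def conj.hom_sum conj.hom_mult mult.commute)
qed (use assms in auto)

lemma adj_minus:
  assumes "(A :: 'a mat) \<in> carrier_mat n m" "B \<in> carrier_mat n m"
  shows "adj q (A - B) = adj q A - adj q B"
  by (rule eq_matI) (use assms in \<open>auto simp: conj.hom_minus\<close>)

lemma adj_uminus: "adj q (- (A :: 'a mat)) = - adj q A"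
  by (rule eq_matI) (auto simp: conj.hom_uminus)

lemma adj_one [simp]: "adj q (1\<^sub>m n :: 'a mat) = 1\<^sub>m n"
  by (rule eq_matI) auto

lemma det_adj: "(A :: 'a mat) \<in> carrier_mat n n \<Longrightarrow> det (adj q A) = det A ^ q"
  by (simp add: adj_eq_map_transpose det_transpose)

lemma hermitian_star_congr:
  assumes "(A :: 'a mat) \<in> carrier_mat n n" "P \<in> carrier_mat m n" "hermitian q A"
  shows "hermitian q (P * A * adj q P)"
proof -
  have "adj q (P * A * adj q P) = P * (adj q A * adj q P)"
    using assms by (simp add: adj_mult[of _ m n _ m] adj_mult[of P m n A n])
  also have "\<dots> = P * A * adj q P"
    using assms unfolding hermitian_def by (simp add: assoc_mult_mat[of P m n A n _ m])
  finally show ?thesis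
    unfolding hermitian_def .
qed

lemma star_congr_mult:
  assumes "(P1 :: 'a mat) \<in> carrier_mat n n" "P2 \<in> carrier_mat n n" "A \<in> carrier_mat n n"
  shows "(P2 * P1) * A * adj q (P2 * P1) = P2 * (P1 * A * adj q P1) * adj q P2"
  using assms by (simp add: adj_mult[of _ n n] assoc_mult_mat[of _ n n _ n _ n] mult_carrier_mat[of _ n n _ n])

lemma star_congruent_refl: "(A :: 'a mat) \<in> carrier_mat n n \<Longrightarrow> star_congruent q n A A"
  using star_congruentI[of "1\<^sub>m n" n q A] by simp

lemma star_congruent_trans:
  assumes "(A :: 'a mat) \<in> carrier_mat n n" "star_congruent q n A B" "star_congruent q n B C"
  shows "star_congruent q n A C"
proof -
  obtain P1 P2 where P1: "P1 \<in> carrier_mat n n" "det P1 \<noteq> 0" "B = P1 * A * adj q P1"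
    and P2: "P2 \<in> carrier_mat n n" "det P2 \<noteq> 0" "C = P2 * B * adj q P2"
    using assms(2,3) unfolding star_congruent_def by blast
  have "C = (P2 * P1) * A * adj q (P2 * P1)"
    using star_congr_mult[OF P1(1) P2(1) assms(1)] P1(3) P2(3) by simp
  moreover have "det (P2 * P1) \<noteq> 0"
    using det_mult[OF P2(1) P1(1)] P1(2) P2(2) by simp
  ultimately show ?thesis
    using P1(1) P2(1) star_congruentI[of "P2 * P1" n] by fastforce
qed

lemma star_congruent_hermitian:
  assumes "(A :: 'a mat) \<in> carrier_mat n n" "hermitian q A" "star_congruent q n A B"
  shows "B \<in> carrier_mat n n" "hermitian q B"
  using assms hermitian_star_congr unfolding star_congruent_def by auto

subsection \<open>Normal form of hermitian matrices\<close>

lemma star_congruent_diag_to_corner: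
  assumes "(A :: 'a mat) \<in> carrier_mat n n" "i < n"
  obtains B where "star_congruent q n A B" "B $$ (0, 0) = A $$ (i, i)"
proof (cases "i = 0")
  case True
  then show ?thesis
    using that star_congruent_refl[OF assms(1)] by blast
next
  case False
  let ?P = "swaprows_mat n 0 i :: 'a mat"
  have "det ?P = - 1"
    by (rule det_swaprows_mat) (use False assms(2) in auto)
  moreover have "(?P * A * adj q ?P) $$ (0, 0) =
      (\<Sum>k<n. \<Sum>l<n. (if k = i then 1 else 0) * A $$ (k, l) * (if l = i then 1 else 0) ^ q)"
    by (rule star_congr_row_diag_index) (use assms False in auto)
  moreover have "\<dots> = A $$ (i, i)"
    using assms by (simp add: if_distrib[of "\<lambda>x. x ^ q"] if_distrib[of "\<lambda>x. x * _"]
        if_distrib[of "\<lambda>x. _ * x"] cong: if_cong)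
  ultimately show ?thesis
    using that star_congruentI[of ?P n q A] by simp
qed

text \<open>With all diagonal entries zero, adding \<open>d\<close> times row \<open>j\<close> to row \<open>i\<close> produces
  the diagonal entry \<open>y + y\<^sup>q\<close> for \<open>d = (y / A\<^sub>i\<^sub>j)\<^sup>q\<close>; choose \<open>y\<close> with nonzero trace.\<close>
lemma star_congruent_diag_nonzero:
  assumes "(A :: 'a mat) \<in> carrier_mat n n" "hermitian q A" "i < n" "j < n"
    and "A $$ (i, i) = 0" "A $$ (j, j) = 0" "A $$ (i, j) \<noteq> 0"
  obtains B where "star_congruent q n A B" "B $$ (i, i) \<noteq> 0"
proof -
  have ij: "i \<noteq> j"
    using assms by auto
  obtain y :: 'a where y: "y ^ q + y \<noteq> 0"
    using trace_nonzero by blast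
  define a where "a = A $$ (i, j)"
  define d where "d = (y / a) ^ q"
  have Aji: "A $$ (j, i) = a ^ q"
    unfolding a_def by (rule hermitian_index[OF assms(2,1,3,4)])
  let ?P = "addrow_mat n d i j :: 'a mat"
  let ?r = "\<lambda>k. (if k = i then 1 else 0) + (if k = j then d else (0::'a))"
  have "(?P * A * adj q ?P) $$ (i, i) = (\<Sum>k<n. \<Sum>l<n. ?r k * A $$ (k, l) * ?r l ^ q)"
    by (rule star_congr_row_diag_index) (use assms ij in auto)
  also have "\<dots> = (\<Sum>k<n. \<Sum>l<n. ?r k * A $$ (k, l) *
      ((if l = i then 1 else 0) + (if l = j then d ^ q else 0)))"
    by (intro sum.cong refl) (auto simp: conj.hom_add)
  also have "\<dots> = A $$ (i, i) + A $$ (i, j) * d ^ q + d * A $$ (j, i) + d * A $$ (j, j) * d ^ q"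
    using assms ij by (simp add: ring_distribs sum.distrib if_distrib[of "\<lambda>x. x * _"]
        if_distrib[of "\<lambda>x. _ * x"] cong: if_cong)
  also have "\<dots> = y + y ^ q"
    using assms(5-7) unfolding Aji a_def[symmetric] d_def
    by (simp add: conj.hom_div conj.hom_mult)
  finally show ?thesis
    using that star_congruentI[of ?P n q A] det_addrow_mat[OF ij, of n d] y by (simp add: add.commute)
qed

lemma star_congruent_corner_one:
  assumes "(A :: 'a mat) \<in> carrier_mat n n" "hermitian q A" "0 < n" "A $$ (0, 0) \<noteq> 0"
  obtains B where "star_congruent q n A B" "B $$ (0, 0) = 1"
proof -
  have "A $$ (0, 0) \<in> fixed_field q"
    using hermitian_index[OF assms(2,1,3,3)] unfolding fixed_field_def by simp
  then obtain c where c: "c \<noteq> 0" "c ^ q * c = A $$ (0, 0)"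
    using norm_surj assms(4) by blast
  let ?P = "multrow_mat n 0 (1 / c) :: 'a mat"
  have "(?P * A * adj q ?P) $$ (0, 0) =
      (\<Sum>k<n. \<Sum>l<n. (if k = 0 then 1 / c else 0) * A $$ (k, l) * (if l = 0 then 1 / c else 0) ^ q)"
    by (rule star_congr_row_diag_index) (use assms in auto)
  also have "\<dots> = (1 / c) * (c ^ q * c) * (1 / c) ^ q"
    using assms c(2) by (simp add: if_distrib[of "\<lambda>x. x ^ q"] if_distrib[of "\<lambda>x. x * _"]
        if_distrib[of "\<lambda>x. _ * x"] cong: if_cong)
  also have "\<dots> = 1"
    using c(1) by (simp add: conj.hom_div)
  finally show ?thesis
    using that star_congruentI[of ?P n q A] det_multrow_mat[OF assms(3), of "1 / c"] c(1) by simp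
qed

lemma star_congruent_corner_one_of_nonzero:
  assumes A: "(A :: 'a mat) \<in> carrier_mat n n" "hermitian q A" and nz: "A \<noteq> 0\<^sub>m n n"
  obtains B where "star_congruent q n A B" "B $$ (0, 0) = 1"
proof -
  obtain B1 i where B1: "star_congruent q n A B1" "i < n" "B1 $$ (i, i) \<noteq> 0"
  proof (cases "\<exists>i<n. A $$ (i, i) \<noteq> 0")
    case True
    then show ?thesis
      using that star_congruent_refl[OF A(1)] by blast
  next
    case False
    obtain i j where ij: "i < n" "j < n" "A $$ (i, j) \<noteq> 0"
      using nonzero_mat_entry[OF A(1) nz] by blast
    with False show ?thesis
      using star_congruent_diag_nonzero[OF A ij(1,2)] that by blast
  qed
  note B1' = star_congruent_hermitian[OF A B1(1)]
  obtain B2 where B2: "star_congruent q n B1 B2" "B2 $$ (0, 0) = B1 $$ (i, i)"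
    using star_congruent_diag_to_corner[OF B1'(1) B1(2)] by blast
  note B2' = star_congruent_hermitian[OF B1' B2(1)]
  obtain B3 where "star_congruent q n B2 B3" "B3 $$ (0, 0) = 1"
    using star_congruent_corner_one[OF B2'] B1(2,3) B2(2) by auto
  then show ?thesis
    using that star_congruent_trans[OF A(1) star_congruent_trans[OF A(1) B1(1) B2(1)]] by blast
qed

lemma hermitian_corner_one_blocks:
  assumes B: "(B :: 'a mat) \<in> carrier_mat (Suc m) (Suc m)" "hermitian q B" and B00: "B $$ (0, 0) = 1"
  obtains b D where "b \<in> carrier_mat 1 m" "D \<in> carrier_mat m m" "hermitian q D"
    "B = four_block_mat (1\<^sub>m 1) b (adj q b) D"
proof
  define b where "b = mat 1 m (\<lambda>(i, j). B $$ (0, j + 1))"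
  define D where "D = mat m m (\<lambda>(i, j). B $$ (i + 1, j + 1))"
  show b: "b \<in> carrier_mat 1 m" and D: "D \<in> carrier_mat m m"
    unfolding b_def D_def by auto
  show "hermitian q D"
    unfolding hermitian_def
  proof (rule eq_matI)
    fix i j assume "i < dim_row D" "j < dim_col D"
    then show "adj q D $$ (i, j) = D $$ (i, j)"
      using hermitian_index[OF B(2,1), of "j + 1" "i + 1"] D unfolding D_def by simp
  qed (use D in auto)
  show "B = four_block_mat (1\<^sub>m 1) b (adj q b) D"
  proof (rule eq_matI)
    fix i j assume "i < dim_row (four_block_mat (1\<^sub>m 1) b (adj q b) D)"
      "j < dim_col (four_block_mat (1\<^sub>m 1) b (adj q b) D)"
    then have i: "i < Suc m" and j: "j < Suc m"
      using b D by auto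
    show "B $$ (i, j) = four_block_mat (1\<^sub>m 1) b (adj q b) D $$ (i, j)"
    proof (cases "i = 0")
      case True
      then show ?thesis
        using j b D B00 unfolding b_def by (cases "j = 0") auto
    next
      case False
      then show ?thesis
        using i j b D hermitian_index[OF B(2,1), of 0 i] unfolding b_def D_def by (cases "j = 0") auto
    qed
  qed (use B b D in auto)
qed

lemma star_congruent_corner_one_split:
  assumes b: "(b :: 'a mat) \<in> carrier_mat 1 m" and D: "D \<in> carrier_mat m m" "hermitian q D"
  shows "star_congruent q (Suc m) (four_block_mat (1\<^sub>m 1) b (adj q b) D)
      (four_block_mat (1\<^sub>m 1) (0\<^sub>m 1 m) (0\<^sub>m m 1) (D - adj q b * b))"
    and "hermitian q (D - adj q b * b)"
proof -
  define b' where "b' = adj q b"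
  define C where "C = D - b' * b"
  define E where "E = four_block_mat (1\<^sub>m 1) (0\<^sub>m 1 m) (- b') (1\<^sub>m m)"
  have b': "b' \<in> carrier_mat m 1"
    unfolding b'_def using b by simp
  have C: "C \<in> carrier_mat m m"
    unfolding C_def using b b' D by auto
  have E: "E \<in> carrier_mat (Suc m) (Suc m)"
    unfolding E_def using b' by auto
  have "det E = 1"
    unfolding E_def by (subst det_four_block_mat_upper_right_zero[of _ 1 _ m]) (use b' in auto)
  have aE: "adj q E = four_block_mat (1\<^sub>m 1) (- b) (0\<^sub>m m 1) (1\<^sub>m m)"
    unfolding E_def b'_def using b by (subst adj_four_block_mat) (auto simp: adj_uminus)
  have "E * four_block_mat (1\<^sub>m 1) b b' D = four_block_mat (1\<^sub>m 1) b (0\<^sub>m m 1) C"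
    unfolding E_def C_def by (rule four_block_corner_one_row_elim[OF b b' D(1)])
  then have EBE: "E * four_block_mat (1\<^sub>m 1) b b' D * adj q E = four_block_mat (1\<^sub>m 1) (0\<^sub>m 1 m) (0\<^sub>m m 1) C"
    unfolding aE by (simp only: four_block_corner_one_col_elim[OF b C])
  have "star_congruent q (Suc m) (four_block_mat (1\<^sub>m 1) b b' D)
      (E * four_block_mat (1\<^sub>m 1) b b' D * adj q E)"
    by (rule star_congruentI[OF E]) (simp add: \<open>det E = 1\<close>)
  then have "star_congruent q (Suc m) (four_block_mat (1\<^sub>m 1) b b' D)
      (four_block_mat (1\<^sub>m 1) (0\<^sub>m 1 m) (0\<^sub>m m 1) C)"
    unfolding EBE .
  then show "star_congruent q (Suc m) (four_block_mat (1\<^sub>m 1) b (adj q b) D)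
      (four_block_mat (1\<^sub>m 1) (0\<^sub>m 1 m) (0\<^sub>m m 1) (D - adj q b * b))"
    unfolding b'_def C_def .
  have "adj q C = adj q D - adj q (b' * b)"
    unfolding C_def using b b' D by (intro adj_minus) auto
  also have "\<dots> = C"
    unfolding C_def b'_def using adj_mult[OF b' b] D(2) unfolding hermitian_def b'_def by simp
  finally show "hermitian q (D - adj q b * b)"
    unfolding hermitian_def C_def b'_def .
qed

lemma star_congruent_one_plus:
  assumes C: "(C :: 'a mat) \<in> carrier_mat m m" and "star_congruent q m C C'"
  shows "star_congruent q (Suc m) (four_block_mat (1\<^sub>m 1) (0\<^sub>m 1 m) (0\<^sub>m m 1) C)
      (four_block_mat (1\<^sub>m 1) (0\<^sub>m 1 m) (0\<^sub>m m 1) C')"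
proof -
  obtain P where P: "P \<in> carrier_mat m m" "det P \<noteq> 0" "C' = P * C * adj q P"
    using assms(2) unfolding star_congruent_def by blast
  let ?I = "1\<^sub>m 1 :: 'a mat" and ?Z1 = "0\<^sub>m 1 m :: 'a mat" and ?Z2 = "0\<^sub>m m 1 :: 'a mat"
  define F where "F = four_block_mat ?I ?Z1 ?Z2 P"
  have F: "F \<in> carrier_mat (Suc m) (Suc m)"
    unfolding F_def using P by auto
  have "det F = det P"
    unfolding F_def by (subst det_four_block_mat_upper_right_zero[of _ 1 _ m]) (use P in auto)
  have aF: "adj q F = four_block_mat ?I ?Z1 ?Z2 (adj q P)"
    unfolding F_def using P by (subst adj_four_block_mat) auto
  have "F * four_block_mat ?I ?Z1 ?Z2 C = four_block_mat (?I * ?I + ?Z1 * ?Z2) (?I * ?Z1 + ?Z1 * C)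
      (?Z2 * ?I + P * ?Z2) (?Z2 * ?Z1 + P * C)"
    unfolding F_def by (rule mult_four_block_mat) (use P C in auto)
  also have "\<dots> = four_block_mat ?I ?Z1 ?Z2 (P * C)"
    using P C by (intro cong_four_block_mat) (auto intro!: eq_matI)
  finally have "F * four_block_mat ?I ?Z1 ?Z2 C * adj q F =
      four_block_mat ?I ?Z1 ?Z2 (P * C) * four_block_mat ?I ?Z1 ?Z2 (adj q P)"
    unfolding aF by simp
  also have "\<dots> = four_block_mat (?I * ?I + ?Z1 * ?Z2) (?I * ?Z1 + ?Z1 * adj q P)
      (?Z2 * ?I + (P * C) * ?Z2) (?Z2 * ?Z1 + (P * C) * adj q P)"
    by (rule mult_four_block_mat) (use P C in auto)
  also have "\<dots> = four_block_mat ?I ?Z1 ?Z2 C'"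
    unfolding P(3) using P C by (intro cong_four_block_mat) (auto intro!: eq_matI)
  finally have FCF: "F * four_block_mat ?I ?Z1 ?Z2 C * adj q F = four_block_mat ?I ?Z1 ?Z2 C'" .
  have "star_congruent q (Suc m) (four_block_mat ?I ?Z1 ?Z2 C) (F * four_block_mat ?I ?Z1 ?Z2 C * adj q F)"
    by (rule star_congruentI[OF F]) (simp add: \<open>det F = det P\<close> P(2))
  then show ?thesis
    unfolding FCF .
qed

lemma hermitian_star_congruent_diag_ones:
  assumes "(A :: 'a mat) \<in> carrier_mat n n" "hermitian q A"
  obtains k where "k \<le> n" "star_congruent q n A (diag_ones n k)"
  using assms
proof (induction n arbitrary: A thesis)
  case 0
  then have "A = diag_ones 0 0"
    by (intro eq_matI) auto
  then show ?case
    using 0 star_congruent_refl by blast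
next
  case (Suc m)
  show ?case
  proof (cases "A = 0\<^sub>m (Suc m) (Suc m)")
    case True
    then have "A = diag_ones (Suc m) 0"
      by (intro eq_matI) (auto simp: diag_ones_index)
    then show ?thesis
      using Suc.prems star_congruent_refl by blast
  next
    case False
    obtain B where B: "star_congruent q (Suc m) A B" "B $$ (0, 0) = 1"
      using star_congruent_corner_one_of_nonzero[OF Suc.prems(2,3) False] by blast
    note B' = star_congruent_hermitian[OF Suc.prems(2,3) B(1)]
    obtain b D where bD: "b \<in> carrier_mat 1 m" "D \<in> carrier_mat m m" "hermitian q D"
      "B = four_block_mat (1\<^sub>m 1) b (adj q b) D"
      using hermitian_corner_one_blocks[OF B' B(2)] by blast
    let ?C = "D - adj q b * b"
    have C: "?C \<in> carrier_mat m m"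
      using bD by auto
    obtain k where k: "k \<le> m" "star_congruent q m ?C (diag_ones m k)"
      using Suc.IH[OF _ C star_congruent_corner_one_split(2)[OF bD(1-3)]] by blast
    have "star_congruent q (Suc m) A (diag_ones (Suc m) (Suc k))"
      using star_congruent_trans[OF Suc.prems(2) B(1)] star_congruent_corner_one_split(1)[OF bD(1-3)]
        star_congruent_one_plus[OF C k(2)] bD(4) four_block_one_diag_ones
      by (metis B'(1) star_congruent_trans)
    then show ?thesis
      using Suc.prems(1)[of "Suc k"] k(1) by simp
  qed
qed

lemma rank_star_diag_ones_le:
  assumes "(R :: 'a mat) \<in> carrier_mat n n" "k \<le> n"
  shows "vec_space.rank n (R * diag_ones n k * adj q R) \<le> k"
proof -
  have "vec_space.rank n (R * diag_ones n k * adj q R) \<le> card {..<k}"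
    by (rule rank_star_congr_le[OF assms(1) diag_ones_carrier, where f = "\<lambda>a i. if i = a then 1 else 0"
          and g = "\<lambda>a j. if j = a then 1 else 0"])
      (use assms(2) in \<open>auto simp: diag_ones_index if_distrib[of "\<lambda>x. x * _"] cong: if_cong\<close>)
  then show ?thesis
    by simp
qed

lemma hermitian_corank_one_normal_frame:
  assumes A: "(A :: 'a mat) \<in> carrier_mat (Suc m) (Suc m)" "hermitian q A"
    and rank: "vec_space.rank (Suc m) A = m"
  obtains P R where "normal_frame q m P R A"
proof -
  let ?n = "Suc m"
  obtain k P where k: "k \<le> ?n" and P: "P \<in> carrier_mat ?n ?n" "det P \<noteq> 0"
    and D: "diag_ones ?n k = P * A * adj q P"
    using hermitian_star_congruent_diag_ones[OF A] unfolding star_congruent_def by blast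
  obtain R where R: "R \<in> carrier_mat ?n ?n" "P * R = 1\<^sub>m ?n" "R * P = 1\<^sub>m ?n"
    using inverse_mat_exists[OF P] by blast
  have "R * diag_ones ?n k * adj q R = (R * P) * A * adj q (R * P)"
    unfolding D using star_congr_mult[OF P(1) R(1) A(1)] by simp
  then have A_eq: "A = R * diag_ones ?n k * adj q R"
    using R(3) A(1) by simp
  have "m \<le> k"
    using rank_star_diag_ones_le[OF R(1) k] rank A_eq by simp
  moreover have "k \<noteq> ?n"
  proof
    assume "k = ?n"
    then have "det A = det R * det R ^ q"
      using A_eq R(1) det_mult[of R ?n "adj q R"] by (simp add: diag_ones_full det_adj)
    moreover have "det R \<noteq> 0"
      using det_ne_zero_of_inverse[OF R(1) P(1) R(3)] .
    ultimately have "vec_space.rank ?n A = ?n"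
      using vec_space.det_rank_iff[OF A(1)] by simp
    with rank show False
      by simp
  qed
  ultimately have "k = m"
    using k by simp
  then show ?thesis
    using that P(1) R A_eq unfolding normal_frame_def by blast
qed

subsection \<open>Inverses of the members of a leaf\<close>

lemma adj_inverse:
  assumes "(P :: 'a mat) \<in> carrier_mat n n" "R \<in> carrier_mat n n" "P * R = 1\<^sub>m n"
  shows "adj q R * adj q P = 1\<^sub>m n"
  using adj_mult[OF assms(1,2)] assms(3) by simp

lemma det_star_congr:
  assumes "(Q :: 'a mat) \<in> carrier_mat n n" "M \<in> carrier_mat n n"
  shows "det (Q * M * adj q Q) = det Q * det M * det Q ^ q"
  using assms by (simp add: det_mult[of _ n] det_adj)

lemma rank_star_congr_full:
  assumes "(Q :: 'a mat) \<in> carrier_mat n n" "det Q \<noteq> 0" "M \<in> carrier_mat n n" "det M \<noteq> 0"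
  shows "vec_space.rank n (Q * M * adj q Q) = n"
proof -
  have "det (Q * M * adj q Q) \<noteq> 0"
    using assms by (simp add: det_star_congr)
  then show ?thesis
    using vec_space.det_rank_iff[of "Q * M * adj q Q" n] assms(1,3) by simp
qed

lemma normal_frame_adj:
  assumes "normal_frame q m P R (A :: 'a mat)"
  shows "adj q P \<in> carrier_mat (Suc m) (Suc m)" "det (adj q P) \<noteq> 0"
  using normal_frameD[OF assms] det_ne_zero_of_inverse[of P "Suc m" R] by (auto simp: det_adj)

lemma outer_mult_mat_vec:
  assumes M: "(M :: 'a mat) \<in> carrier_mat n n" and v: "v \<in> carrier_vec n"
  shows "col (M *\<^sub>v v) * rowc q (M *\<^sub>v v) = M * (col v * rowc q v) * adj q M"
proof -
  have cv: "col v \<in> carrier_mat n 1" and rv: "rowc q v \<in> carrier_mat 1 n"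
    using v by auto
  have aM: "adj q M \<in> carrier_mat n n"
    using M by simp
  have "rowc q (M *\<^sub>v v) = rowc q v * adj q M"
    unfolding rowc_def col_mult_mat_vec[OF M v] using adj_mult[OF M cv] by simp
  then have "col (M *\<^sub>v v) * rowc q (M *\<^sub>v v) = M * col v * (rowc q v * adj q M)"
    using col_mult_mat_vec[OF M v] by simp
  also have "\<dots> = M * (col v * (rowc q v * adj q M))"
    by (rule assoc_mult_mat[OF M cv mult_carrier_mat[OF rv aM]])
  also have "\<dots> = M * ((col v * rowc q v) * adj q M)"
    by (simp only: assoc_mult_mat[OF cv rv aM])
  also have "\<dots> = M * (col v * rowc q v) * adj q M"
    by (rule assoc_mult_mat[OF M mult_carrier_mat[OF cv rv] aM, symmetric])
  finally show ?thesis .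
qed

lemma leaf_smult: "s \<noteq> 0 \<Longrightarrow> leaf q A (s \<cdot>\<^sub>v (x :: 'a vec)) = leaf q A x"
  by (rule leaf_eq_of_outer_eq_smult[OF _ _ outer_smult])
    (auto simp: fixed_field_def power_mult_distrib mult.commute)

lemma conj_row_mult_block_z_dehom:
  assumes x: "(x :: 'a vec) \<in> carrier_vec (Suc m)" and t: "x $ m \<noteq> 0" and j: "j < Suc m"
  shows "(\<Sum>k<Suc m. (x $ k) ^ q * block_z q (Suc m) (dehom m x) $$ (k, j)) = 0"
proof -
  let ?t = "x $ m" and ?B = "block_z q (Suc m) (dehom m x)"
  define S where "S = (\<Sum>k<m. (x $ k) ^ q * x $ k)"
  have "(\<Sum>k<Suc m. (x $ k) ^ q * ?B $$ (k, j)) = (\<Sum>k<m. (x $ k) ^ q * ?B $$ (k, j)) + ?t ^ q * ?B $$ (m, j)"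
    by simp
  also have "\<dots> = 0"
  proof (cases "j < m")
    case True
    have "(\<Sum>k<m. (x $ k) ^ q * ?B $$ (k, j)) = (\<Sum>k<m. if k = j then (x $ k) ^ q else 0)"
      by (intro sum.cong refl) (use True in \<open>auto simp: block_z_index\<close>)
    then show ?thesis
      using True t by (simp add: block_z_index conj.hom_uminus conj.hom_div field_simps)
  next
    case False
    with j have jm: "j = m"
      by simp
    have "(\<Sum>k<m. (x $ k) ^ q * ?B $$ (k, j)) = (\<Sum>k<m. - ((x $ k) ^ q * x $ k) / ?t)"
      by (intro sum.cong refl) (auto simp: jm block_z_index)
    also have "\<dots> = - S / ?t"
      unfolding S_def by (simp add: sum_divide_distrib sum_negf)
    finally have row: "(\<Sum>k<m. (x $ k) ^ q * ?B $$ (k, j)) = - S / ?t" .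
    have "?B $$ (m, j) = (\<Sum>k<m. (dehom m x $ k) ^ q * dehom m x $ k)"
      using jm by (simp add: block_z_index del: dehom_index)
    also have "\<dots> = (\<Sum>k<m. ((x $ k) ^ q * x $ k) / (?t ^ q * ?t))"
      by (intro sum.cong refl) (use t in \<open>auto simp: conj.hom_uminus conj.hom_div field_simps\<close>)
    also have "\<dots> = S / (?t ^ q * ?t)"
      unfolding S_def by (simp add: sum_divide_distrib)
    finally have corner: "?B $$ (m, j) = S / (?t ^ q * ?t)" .
    show ?thesis
      unfolding row corner using t by (simp add: field_simps)
  qed
  finally show ?thesis .
qed

text \<open>The computation rests on \<open>x\<^sup>* B\<^sub>z = 0\<close> for \<open>z = dehom m x\<close>.\<close>
lemma diag_ones_plus_outer_inverse:
  assumes x: "(x :: 'a vec) \<in> carrier_vec (Suc m)" and t: "x $ m \<noteq> 0" and l: "l \<noteq> 0"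
  shows "(diag_ones (Suc m) m + l \<cdot>\<^sub>m (col x * rowc q x)) *
      (block_z q (Suc m) (dehom m x) + (1 / (l * (x $ m) ^ q * x $ m)) \<cdot>\<^sub>m corner_unit (Suc m)) = 1\<^sub>m (Suc m)"
    (is "?L * ?M = _")
proof (rule eq_matI)
  let ?t = "x $ m" and ?\<mu> = "1 / (l * (x $ m) ^ q * x $ m)" and ?B = "block_z q (Suc m) (dehom m x)"
  have B: "?B \<in> carrier_mat (Suc m) (Suc m)"
    by simp
  fix i j assume "i < dim_row (1\<^sub>m (Suc m) :: 'a mat)" "j < dim_col (1\<^sub>m (Suc m) :: 'a mat)"
  then have i: "i < Suc m" and j: "j < Suc m"
    by auto
  have L: "?L $$ (i, k) = (if i = k \<and> i < m then 1 else 0) + l * x $ i * (x $ k) ^ q" if "k < Suc m" for k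
    using i that x outer_index[of i x k x q] by (simp add: diag_ones_index del: index_mult_mat(1))
  have M: "?M $$ (k, j) = ?B $$ (k, j) + (if k = m \<and> j = m then ?\<mu> else 0)" if "k < Suc m" for k
    using j that B by (simp add: corner_unit_index)
  have xM: "(\<Sum>k<Suc m. (x $ k) ^ q * ?M $$ (k, j)) = (if j = m then ?t ^ q * ?\<mu> else 0)"
  proof -
    have "(\<Sum>k<Suc m. (x $ k) ^ q * ?M $$ (k, j)) =
        (\<Sum>k<Suc m. (x $ k) ^ q * ?B $$ (k, j)) + (\<Sum>k<Suc m. if k = m \<and> j = m then (x $ k) ^ q * ?\<mu> else 0)"
      by (simp add: M distrib_left sum.distrib)
    then show ?thesis
      using conj_row_mult_block_z_dehom[OF x t j] by simp
  qed
  have "(?L * ?M) $$ (i, j) = (\<Sum>k<Suc m. ?L $$ (i, k) * ?M $$ (k, j))"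
    using i j x by (simp add: scalar_prod_def lessThan_atLeast0)
  also have "\<dots> = (\<Sum>k<Suc m. (if i = k \<and> i < m then ?M $$ (k, j) else 0) +
      l * x $ i * ((x $ k) ^ q * ?M $$ (k, j)))"
    by (intro sum.cong refl) (auto simp: L algebra_simps)
  also have "\<dots> = (\<Sum>k<Suc m. (if i = k \<and> i < m then ?M $$ (k, j) else 0)) +
      l * x $ i * (\<Sum>k<Suc m. (x $ k) ^ q * ?M $$ (k, j))"
    by (simp only: sum.distrib sum_distrib_left)
  also have "\<dots> = (if i < m then ?B $$ (i, j) else 0) + l * x $ i * (if j = m then ?t ^ q * ?\<mu> else 0)"
  proof -
    have "(\<Sum>k<Suc m. (if i = k \<and> i < m then ?M $$ (k, j) else 0)) = (if i < m then ?B $$ (i, j) else 0)"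
      using i by (cases "i < m") (simp_all add: M)
    then show ?thesis
      unfolding xM by simp
  qed
  also have "\<dots> = 1\<^sub>m (Suc m) $$ (i, j)"
    using i j t l by (cases "i < m"; cases "j < m") (auto simp: block_z_index less_Suc_eq field_simps)
  finally show "(?L * ?M) $$ (i, j) = 1\<^sub>m (Suc m) $$ (i, j)" .
qed (use x in auto)

lemma det_block_z_plus_corner:
  assumes z: "(z :: 'a vec) \<in> carrier_vec m" and g: "g \<noteq> 0"
  shows "det (block_z q (Suc m) z + g \<cdot>\<^sub>m corner_unit (Suc m)) \<noteq> 0"
proof -
  define x where "x = vec (Suc m) (\<lambda>i. if i < m then - z $ i else 1)"
  have x: "x \<in> carrier_vec (Suc m)" "x $ m = 1" "dehom m x = z"
    unfolding x_def using dehom_lift[OF z] by auto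
  let ?L = "diag_ones (Suc m) m + (1 / g) \<cdot>\<^sub>m (col x * rowc q x)"
  let ?M = "block_z q (Suc m) z + g \<cdot>\<^sub>m corner_unit (Suc m)"
  have "?L * ?M = 1\<^sub>m (Suc m)"
    using diag_ones_plus_outer_inverse[OF x(1) _, of "1 / g"] x(2,3) g by simp
  moreover have "?L \<in> carrier_mat (Suc m) (Suc m)" "?M \<in> carrier_mat (Suc m) (Suc m)"
    using x(1) z by auto
  ultimately have "det ?L * det ?M = 1"
    using det_mult[of ?L "Suc m" ?M] by simp
  then show ?thesis
    by auto
qed

lemma normal_frame_last_coord_nonzero:
  assumes frame: "normal_frame q m P R (A :: 'a mat)"
    and x: "x \<in> carrier_vec (Suc m)" "x \<notin> vec_space.col_space (Suc m) A"
  shows "(P *\<^sub>v x) $ m \<noteq> 0"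
proof
  assume t: "(P *\<^sub>v x) $ m = 0"
  note F = normal_frameD[OF frame]
  let ?n = "Suc m" and ?y = "P *\<^sub>v x"
  have y: "?y \<in> carrier_vec ?n"
    using F(1) x(1) by simp
  have Ry: "R *\<^sub>v ?y = x"
    using F(1,2,4) x(1) by (simp flip: assoc_mult_mat_vec)
  define w where "w = adj q P *\<^sub>v ?y"
  have w: "w \<in> carrier_vec ?n"
    unfolding w_def by (rule mult_mat_vec_carrier[OF adj_carrier[OF F(1)] y])
  have A: "A \<in> carrier_mat ?n ?n"
    using F(2,5) by simp
  have aR: "adj q R \<in> carrier_mat ?n ?n" and D: "diag_ones ?n m \<in> carrier_mat ?n ?n"
    using F(2) by auto
  have "A *\<^sub>v w = (R * diag_ones ?n m) *\<^sub>v (adj q R *\<^sub>v w)"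
    unfolding F(5) by (rule assoc_mult_mat_vec[OF mult_carrier_mat[OF F(2) D] aR w])
  also have "\<dots> = R *\<^sub>v (diag_ones ?n m *\<^sub>v (adj q R *\<^sub>v w))"
    by (rule assoc_mult_mat_vec[OF F(2) D mult_mat_vec_carrier[OF aR w]])
  also have "adj q R *\<^sub>v w = (adj q R * adj q P) *\<^sub>v ?y"
    unfolding w_def by (rule assoc_mult_mat_vec[OF aR adj_carrier[OF F(1)] y, symmetric])
  also have "\<dots> = ?y"
    unfolding adj_inverse[OF F(1-3)] using y by simp
  also have "R *\<^sub>v (diag_ones ?n m *\<^sub>v ?y) = x"
    using diag_ones_mult_vec_last_zero[OF y t] Ry by simp
  finally have "x \<in> vec_space.col_space ?n A"
    using vec_space.col_space_eq[OF A] w x(1) A by auto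
  with x(2) show False ..
qed

lemma normal_frame_leaf_inverse:
  assumes frame: "normal_frame q m P R (A :: 'a mat)" and x: "x \<in> carrier_vec (Suc m)"
    and t: "(P *\<^sub>v x) $ m \<noteq> 0" and l: "l \<noteq> 0"
  shows "(A + l \<cdot>\<^sub>m (col x * rowc q x)) * (adj q P * (block_z q (Suc m) (dehom m (P *\<^sub>v x)) +
      (1 / (l * ((P *\<^sub>v x) $ m) ^ q * (P *\<^sub>v x) $ m)) \<cdot>\<^sub>m corner_unit (Suc m)) * P) = 1\<^sub>m (Suc m)"
proof -
  note F = normal_frameD[OF frame]
  let ?n = "Suc m" and ?y = "P *\<^sub>v x"
  define M1 where "M1 = diag_ones ?n m + l \<cdot>\<^sub>m (col ?y * rowc q ?y)"
  define M2 where "M2 = block_z q ?n (dehom m ?y) + (1 / (l * (?y $ m) ^ q * ?y $ m)) \<cdot>\<^sub>m corner_unit ?n"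
  have y: "?y \<in> carrier_vec ?n"
    using F(1) x by simp
  have M1: "M1 \<in> carrier_mat ?n ?n" and M2: "M2 \<in> carrier_mat ?n ?n"
    unfolding M1_def M2_def using y by auto
  have "R *\<^sub>v ?y = x"
    using F(1,2,4) x by (simp flip: assoc_mult_mat_vec)
  then have "col x * rowc q x = R * (col ?y * rowc q ?y) * adj q R"
    using outer_mult_mat_vec[OF F(2) y] by simp
  then have "A + l \<cdot>\<^sub>m (col x * rowc q x) = R * M1 * adj q R"
    unfolding M1_def F(5) using star_congr_add[OF F(2), of "diag_ones ?n m" "l \<cdot>\<^sub>m (col ?y * rowc q ?y)"]
      star_congr_smult[OF F(2), of "col ?y * rowc q ?y" l] y by simp
  moreover have "M1 * M2 = 1\<^sub>m ?n"
    unfolding M1_def M2_def by (rule diag_ones_plus_outer_inverse[OF y t l])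
  moreover have "(R * M1 * adj q R) * (adj q P * M2 * P) = R * (M1 * ((adj q R * adj q P) * (M2 * P)))"
    using F(1,2) M1 M2
    by (simp add: assoc_mult_mat[of _ ?n ?n _ ?n _ ?n] mult_carrier_mat[of _ ?n ?n])
  moreover have "M1 * ((adj q R * adj q P) * (M2 * P)) = (M1 * M2) * P"
    unfolding adj_inverse[OF F(1-3)] using M1 M2 F(1) by (simp add: assoc_mult_mat[OF M1 M2 F(1)])
  ultimately show ?thesis
    unfolding M2_def[symmetric] using M1 M2 F(1,2,4) by simp
qed

lemma star_corner_unit_nonzero:
  assumes Q: "(Q :: 'a mat) \<in> carrier_mat (Suc m) (Suc m)" "det Q \<noteq> 0"
  shows "Q * corner_unit (Suc m) * adj q Q \<noteq> 0\<^sub>m (Suc m) (Suc m)"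
proof
  assume zero: "Q * corner_unit (Suc m) * adj q Q = 0\<^sub>m (Suc m) (Suc m)"
  obtain Qi where Qi: "Qi \<in> carrier_mat (Suc m) (Suc m)" "Qi * Q = 1\<^sub>m (Suc m)"
    using inverse_mat_exists[OF Q] by blast
  have "corner_unit (Suc m) = (Qi * Q) * corner_unit (Suc m) * adj q (Qi * Q)"
    using Qi(2) by simp
  also have "\<dots> = 0\<^sub>m (Suc m) (Suc m)"
    unfolding star_congr_mult[OF Q(1) Qi(1) corner_unit_carrier] zero using Qi(1) by simp
  finally have "corner_unit (Suc m) $$ (m, m) = (0 :: 'a)"
    by simp
  then show False
    by (simp add: corner_unit_index)
qed

lemma two_nonzero_fixed_field:
  assumes "3 \<le> q"
  obtains a b :: 'a where "a \<in> fixed_field q - {0}" "b \<in> fixed_field q - {0}" "a \<noteq> b"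
proof -
  have "2 \<le> card (fixed_field q - {0::'a})"
    using card_nonzero_fixed_field assms by simp
  then obtain T where "T \<subseteq> fixed_field q - {0::'a}" "card T = 2" "finite T"
    by (rule obtain_subset_with_card_n)
  then show ?thesis
    using that by (auto simp: card_2_iff)
qed

lemma normal_frame_inverse_leaf_points:
  assumes frame: "normal_frame q m P R (A :: 'a mat)"
    and x: "x \<in> carrier_vec (Suc m)" "x \<notin> vec_space.col_space (Suc m) A"
    and y: "inv_set (Suc m) (leaf q A x) = leaf q N y"
    and l: "l \<in> fixed_field q - {0}"
  obtains c where "adj q P * block_z q (Suc m) (dehom m (P *\<^sub>v x)) * P +
      (1 / (l * ((P *\<^sub>v x) $ m) ^ q * (P *\<^sub>v x) $ m)) \<cdot>\<^sub>m (adj q P * corner_unit (Suc m) * P) =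
    N + c \<cdot>\<^sub>m (col y * rowc q y)"
proof -
  let ?n = "Suc m" and ?B = "block_z q (Suc m) (dehom m (P *\<^sub>v x))"
  let ?\<mu> = "1 / (l * ((P *\<^sub>v x) $ m) ^ q * (P *\<^sub>v x) $ m)"
  let ?Y = "adj q P * (?B + ?\<mu> \<cdot>\<^sub>m corner_unit ?n) * P"
  note F = normal_frameD[OF frame]
  have Q: "adj q P \<in> carrier_mat ?n ?n"
    using F(1) by simp
  have "A + l \<cdot>\<^sub>m (col x * rowc q x) \<in> leaf q A x"
    unfolding leaf_def using l by auto
  moreover have "A + l \<cdot>\<^sub>m (col x * rowc q x) \<in> carrier_mat ?n ?n"
    using F(2,5) x(1) by simp
  moreover have "?Y \<in> carrier_mat ?n ?n"
    using star_congr_carrier[OF Q, of "?B + ?\<mu> \<cdot>\<^sub>m corner_unit ?n" q] by simp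
  moreover have "(A + l \<cdot>\<^sub>m (col x * rowc q x)) * ?Y = 1\<^sub>m ?n"
    using normal_frame_leaf_inverse[OF frame x(1) normal_frame_last_coord_nonzero[OF frame x]] l by simp
  ultimately have "?Y \<in> inv_set ?n (leaf q A x)"
    by (intro inv_set_memI)
  then have "?Y \<in> leaf q N y"
    unfolding y .
  then obtain c where "?Y = N + c \<cdot>\<^sub>m (col y * rowc q y)"
    unfolding leaf_def by blast
  then have "adj q P * ?B * P + ?\<mu> \<cdot>\<^sub>m (adj q P * corner_unit ?n * P) = N + c \<cdot>\<^sub>m (col y * rowc q y)"
    using star_congr_add[OF Q, of ?B "?\<mu> \<cdot>\<^sub>m corner_unit ?n" q]
      star_congr_smult[OF Q corner_unit_carrier, where q = q] by simp
  then show ?thesis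
    by (rule that)
qed

lemma star_block_z_plus_corner_singular:
  assumes Q: "(Q :: 'a mat) \<in> carrier_mat (Suc m) (Suc m)" "det Q \<noteq> 0" and z: "z \<in> carrier_vec m"
    and rank: "vec_space.rank (Suc m) (Q * (block_z q (Suc m) z + \<gamma> \<cdot>\<^sub>m corner_unit (Suc m)) * adj q Q) = m"
  shows "\<gamma> = 0"
proof (rule ccontr)
  assume "\<gamma> \<noteq> 0"
  then have "vec_space.rank (Suc m) (Q * (block_z q (Suc m) z + \<gamma> \<cdot>\<^sub>m corner_unit (Suc m)) * adj q Q) = Suc m"
    using rank_star_congr_full[OF Q] det_block_z_plus_corner[OF z] by simp
  with rank show False
    by simp
qed

lemma inverse_leaf_normal_form:
  assumes q3: "3 \<le> q" and frame: "normal_frame q m P R (A :: 'a mat)"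
    and x: "x \<in> carrier_vec (Suc m)" "x \<notin> vec_space.col_space (Suc m) A"
    and N: "N \<in> carrier_mat (Suc m) (Suc m)" "vec_space.rank (Suc m) N = m"
    and leaf: "is_leaf q (Suc m) N (inv_set (Suc m) (leaf q A x))"
  shows "N = adj q P * block_z q (Suc m) (dehom m (P *\<^sub>v x)) * P"
proof -
  let ?n = "Suc m" and ?E = "corner_unit (Suc m) :: 'a mat"
  let ?B = "block_z q ?n (dehom m (P *\<^sub>v x))" and ?t = "(P *\<^sub>v x) $ m"
  have Q: "adj q P \<in> carrier_mat ?n ?n" "det (adj q P) \<noteq> 0"
    using normal_frame_adj[OF frame] by auto
  obtain y where y: "y \<in> carrier_vec ?n" "inv_set ?n (leaf q A x) = leaf q N y"
    using leaf unfolding is_leaf_iff by blast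
  obtain a b :: 'a where ab: "a \<in> fixed_field q - {0}" "b \<in> fixed_field q - {0}" "a \<noteq> b"
    using two_nonzero_fixed_field[OF q3] by blast
  obtain c1 c2 where
    "adj q P * ?B * P + (1 / (a * ?t ^ q * ?t)) \<cdot>\<^sub>m (adj q P * ?E * P) = N + c1 \<cdot>\<^sub>m (col y * rowc q y)"
    "adj q P * ?B * P + (1 / (b * ?t ^ q * ?t)) \<cdot>\<^sub>m (adj q P * ?E * P) = N + c2 \<cdot>\<^sub>m (col y * rowc q y)"
    using normal_frame_inverse_leaf_points[OF frame x y(2)] ab(1,2) by metis
  moreover have "1 / (a * ?t ^ q * ?t) \<noteq> 1 / (b * ?t ^ q * ?t)"
    using ab normal_frame_last_coord_nonzero[OF frame x] by auto
  moreover have "adj q P * ?E * P \<noteq> 0\<^sub>m ?n ?n"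
    using star_corner_unit_nonzero[OF Q] by simp
  ultimately obtain \<gamma> where "N = adj q P * ?B * P + \<gamma> \<cdot>\<^sub>m (adj q P * ?E * P)"
    using eq_on_line_of_two_points[of "adj q P * ?B * P" ?n "adj q P * ?E * P" N "col y * rowc q y"]
      star_congr_carrier[OF Q(1)] N(1) y(1) by (metis adj_adj block_z_carrier corner_unit_carrier outer_carrier)
  then have N_eq: "N = adj q P * (?B + \<gamma> \<cdot>\<^sub>m ?E) * P"
    using star_congr_add[OF Q(1), of ?B "\<gamma> \<cdot>\<^sub>m ?E" q]
      star_congr_smult[OF Q(1) corner_unit_carrier, where q = q] by simp
  then have "\<gamma> = 0"
    using star_block_z_plus_corner_singular[OF Q dehom_carrier, where \<gamma> = \<gamma>] N(2) by simp
  moreover have "?B + 0 \<cdot>\<^sub>m ?E = ?B"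
    by (intro eq_matI) auto
  ultimately show ?thesis
    using N_eq by simp
qed

lemma normal_frame_leaf_eq_of_dehom_eq:
  assumes frame: "normal_frame q m P R (A :: 'a mat)"
    and x1: "x1 \<in> carrier_vec (Suc m)" "x1 \<notin> vec_space.col_space (Suc m) A"
    and x2: "x2 \<in> carrier_vec (Suc m)" "x2 \<notin> vec_space.col_space (Suc m) A"
    and eq: "dehom m (P *\<^sub>v x1) = dehom m (P *\<^sub>v x2)"
  shows "leaf q A x1 = leaf q A x2"
proof -
  note F = normal_frameD[OF frame]
  define s where "s = (P *\<^sub>v x2) $ m / (P *\<^sub>v x1) $ m"
  have t: "(P *\<^sub>v x1) $ m \<noteq> 0" "(P *\<^sub>v x2) $ m \<noteq> 0"
    using normal_frame_last_coord_nonzero[OF frame] x1 x2 by auto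
  then have "s \<noteq> 0"
    unfolding s_def by simp
  have "P *\<^sub>v x2 = s \<cdot>\<^sub>v (P *\<^sub>v x1)"
    unfolding s_def using smult_of_dehom_eq[OF _ _ t eq] F(1) x1(1) x2(1) by simp
  then have "R *\<^sub>v (P *\<^sub>v x2) = s \<cdot>\<^sub>v (R *\<^sub>v (P *\<^sub>v x1))"
    using F(1,2) x1(1) by (simp add: mult_mat_vec)
  then have "x2 = s \<cdot>\<^sub>v x1"
    using F(1,2,4) x1(1) x2(1) by (simp flip: assoc_mult_mat_vec)
  then show ?thesis
    using leaf_smult[OF \<open>s \<noteq> 0\<close>] by simp
qed

subsection \<open>Difference of two inverse leaves\<close>

lemma block_z_diff_index:
  assumes "(z1 :: 'a vec) \<in> carrier_vec m" "z2 \<in> carrier_vec m" "k < Suc m" "l < Suc m"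
  shows "block_z q (Suc m) z1 $$ (k, l) - block_z q (Suc m) z2 $$ (k, l) =
    (if k < m then (if l < m then 0 else z1 $ k - z2 $ k)
     else if l < m then (z1 $ l - z2 $ l) ^ q
     else (\<Sum>i<m. (z1 $ i) ^ q * z1 $ i) - (\<Sum>i<m. (z2 $ i) ^ q * z2 $ i))"
  using assms by (simp add: block_z_index[OF assms(1)] block_z_index[OF assms(2)] conj.hom_minus)

lemma rank_star_block_z_diff_le:
  assumes Q: "(Q :: 'a mat) \<in> carrier_mat (Suc m) (Suc m)" and z: "z1 \<in> carrier_vec m" "z2 \<in> carrier_vec m"
  shows "vec_space.rank (Suc m) (Q * (block_z q (Suc m) z1 - block_z q (Suc m) z2) * adj q Q) \<le> 2"
proof -
  let ?w = "\<lambda>k. z1 $ k - z2 $ k"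
  let ?c = "(\<Sum>i<m. (z1 $ i) ^ q * z1 $ i) - (\<Sum>i<m. (z2 $ i) ^ q * z2 $ i)"
  have "vec_space.rank (Suc m) (Q * (block_z q (Suc m) z1 - block_z q (Suc m) z2) * adj q Q) \<le> card {0::nat, 1}"
    by (rule rank_star_congr_le[OF Q minus_carrier_mat[OF block_z_carrier],
          where f = "\<lambda>a k. if a = 0 then (if k < m then ?w k else 0) else (if k = m then 1 else 0)"
          and g = "\<lambda>a l. if a = 0 then (if l = m then 1 else 0) else (if l < m then (?w l) ^ q else ?c)"])
      (auto simp: block_z_diff_index[OF z])
  then show ?thesis
    by simp
qed

text \<open>Adding the diagonal projection onto the coordinates \<open>k < m\<close>, \<open>k \<noteq> r\<close> (a matrix of rank
  \<open>m - 1\<close>) makes the difference of two blocks invertible, so that difference has rank at least 2.\<close>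
lemma det_block_z_diff_plus_diag:
  assumes z: "(z1 :: 'a vec) \<in> carrier_vec m" "z2 \<in> carrier_vec m" and r: "r < m" "z1 $ r \<noteq> z2 $ r"
  shows "det (block_z q (Suc m) z1 - block_z q (Suc m) z2 + mat_diag (Suc m) (\<lambda>k. if k < m \<and> k \<noteq> r then 1 else 0))
    \<noteq> 0" (is "det ?M \<noteq> 0")
proof
  assume "det ?M = 0"
  let ?n = "Suc m" and ?w = "\<lambda>k. z1 $ k - z2 $ k"
  have M: "?M \<in> carrier_mat ?n ?n"
    by (rule carrier_matI) (simp_all add: mat_diag_def)
  obtain v where v: "v \<in> carrier_vec ?n" "v \<noteq> 0\<^sub>v ?n" "?M *\<^sub>v v = 0\<^sub>v ?n"
    using det_0_iff_vec_prod_zero[OF M] \<open>det ?M = 0\<close> by blast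
  have Mi: "?M $$ (k, l) = (if k < m then (if l < m then (if k = l \<and> k \<noteq> r then 1 else 0) else ?w k)
      else if l < m then (?w l) ^ q else (\<Sum>i<m. (z1 $ i) ^ q * z1 $ i) - (\<Sum>i<m. (z2 $ i) ^ q * z2 $ i))"
    if "k < ?n" "l < ?n" for k l
    using that z block_z_diff_index[OF z that] by (auto simp: mat_diag_def)
  have Md: "dim_row ?M = ?n" "dim_col ?M = ?n"
    using carrier_matD[OF M] by simp_all
  have row: "(\<Sum>l<m. ?M $$ (k, l) * v $ l) + ?M $$ (k, m) * v $ m = 0" if "k < ?n" for k
  proof -
    have "(\<Sum>l<?n. ?M $$ (k, l) * v $ l) = 0"
      using arg_cong[OF v(3), of "\<lambda>u. u $ k"] that v(1) Md
      by (simp add: scalar_prod_def lessThan_atLeast0 del: index_add_mat index_minus_mat)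
    then show ?thesis
      by simp
  qed
  have vm: "v $ m = 0"
  proof -
    have "(\<Sum>l<m. ?M $$ (r, l) * v $ l) = 0"
      using r by (intro sum.neutral) (auto simp: Mi)
    then show ?thesis
      using row[of r] r by (simp add: Mi)
  qed
  have vk: "v $ k = 0" if "k < m" "k \<noteq> r" for k
  proof -
    have "(\<Sum>l<m. ?M $$ (k, l) * v $ l) = (\<Sum>l<m. if l = k then v $ l else 0)"
      using that by (intro sum.cong refl) (auto simp: Mi)
    then show ?thesis
      using row[of k] that vm by simp
  qed
  have vr: "v $ r = 0"
  proof -
    have "(\<Sum>l<m. ?M $$ (m, l) * v $ l) = (\<Sum>l<m. if l = r then (?w r) ^ q * v $ r else 0)"
      using vk by (intro sum.cong refl) (auto simp: Mi)
    then have "(?w r) ^ q * v $ r = 0"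
      using row[of m] r vm by simp
    then show ?thesis
      using r by simp
  qed
  have "v = 0\<^sub>v ?n"
  proof (rule eq_vecI)
    fix k assume "k < dim_vec (0\<^sub>v ?n :: 'a vec)"
    then show "v $ k = 0\<^sub>v ?n $ k"
      using vm vk vr by (cases "k = m"; cases "k = r") (auto simp: less_Suc_eq)
  qed (use v in auto)
  with v(2) show False ..
qed

lemma rank_star_block_z_diff:
  assumes Q: "(Q :: 'a mat) \<in> carrier_mat (Suc m) (Suc m)" "det Q \<noteq> 0"
    and z: "z1 \<in> carrier_vec m" "z2 \<in> carrier_vec m" "z1 \<noteq> z2"
  shows "vec_space.rank (Suc m) (Q * block_z q (Suc m) z1 * adj q Q - Q * block_z q (Suc m) z2 * adj q Q) = 2"
proof -
  let ?n = "Suc m"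
  let ?D = "block_z q ?n z1 - block_z q ?n z2"
  have D: "?D \<in> carrier_mat ?n ?n"
    by (rule minus_carrier_mat[OF block_z_carrier])
  obtain r where r: "r < m" "z1 $ r \<noteq> z2 $ r"
    using z by (metis carrier_vecD eq_vecI)
  define Y where "Y = mat_diag ?n (\<lambda>k. if k < m \<and> k \<noteq> r then 1 else (0::'a))"
  have Y: "Y \<in> carrier_mat ?n ?n"
    unfolding Y_def by simp
  have "vec_space.rank ?n (Q * Y * adj q Q) \<le> card ({..<m} - {r})"
    by (rule rank_star_congr_le[OF Q(1) Y, where f = "\<lambda>a k. if k = a then 1 else 0"
          and g = "\<lambda>a l. if l = a then 1 else 0"])
      (auto simp: Y_def mat_diag_def if_distrib[of "\<lambda>x. x * _"] cong: if_cong)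
  then have rank_Y: "vec_space.rank ?n (Q * Y * adj q Q) \<le> m - 1"
    using r by simp
  have "vec_space.rank ?n (Q * (?D + Y) * adj q Q) = ?n"
    by (rule rank_star_congr_full[OF Q]) (use D Y det_block_z_diff_plus_diag[OF z(1,2) r] in
      \<open>auto simp: Y_def\<close>)
  also have "Q * (?D + Y) * adj q Q = Q * ?D * adj q Q + Q * Y * adj q Q"
    by (rule star_congr_add[OF Q(1) D Y])
  finally have "?n \<le> vec_space.rank ?n (Q * ?D * adj q Q) + vec_space.rank ?n (Q * Y * adj q Q)"
    using vec_space.rank_subadditive[of "Q * ?D * adj q Q" ?n ?n "Q * Y * adj q Q"] Q(1) D Y by auto
  then have "2 \<le> vec_space.rank ?n (Q * ?D * adj q Q)"
    using rank_Y r by linarith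
  then show ?thesis
    using rank_star_block_z_diff_le[OF Q(1) z(1,2)] star_congr_minus[OF Q(1), of "block_z q ?n z1"
        "block_z q ?n z2"] z by simp
qed

end

theorem corollary3p2:
  fixes A N1 N2 :: "'a::{finite,field} mat" and L1 L2 :: "'a mat set" and q n :: nat
  assumes "card (UNIV :: 'a set) = q ^ 2" and "q \<ge> 3" and "n \<ge> 2"
    and "A \<in> carrier_mat n n" and "hermitian q A" and "vec_space.rank n A = n - 1"
    and "is_leaf q n A L1" and "is_leaf q n A L2" and "L1 \<noteq> L2"
    and "N1 \<in> carrier_mat n n" and "hermitian q N1" and "vec_space.rank n N1 = n - 1"
    and "is_leaf q n N1 (inv_set n L1)"
    and "N2 \<in> carrier_mat n n" and "hermitian q N2" and "vec_space.rank n N2 = n - 1"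
    and "is_leaf q n N2 (inv_set n L2)"
  shows "(\<exists>Q z1 z2. Q \<in> carrier_mat n n \<and> invertible_mat Q \<and>
            z1 \<in> carrier_vec (n - 1) \<and> z2 \<in> carrier_vec (n - 1) \<and> z1 \<noteq> z2 \<and>
            N1 = Q * block_z q n z1 * adj q Q \<and> N2 = Q * block_z q n z2 * adj q Q)
         \<and> vec_space.rank n (N1 - N2) = 2"
proof -
  note card = assms(1)
  obtain m where n: "n = Suc m"
    using assms(3) by (cases n) auto
  obtain P R where frame: "normal_frame q m P R A"
    using hermitian_corank_one_normal_frame[OF card, where A = A and m = m] assms(4-6) unfolding n by auto
  obtain x1 where x1: "x1 \<in> carrier_vec n" "x1 \<notin> vec_space.col_space n A" "L1 = leaf q A x1"
    using assms(7) unfolding is_leaf_iff by blast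
  obtain x2 where x2: "x2 \<in> carrier_vec n" "x2 \<notin> vec_space.col_space n A" "L2 = leaf q A x2"
    using assms(8) unfolding is_leaf_iff by blast
  define Q where "Q = adj q P"
  define z1 where "z1 = dehom m (P *\<^sub>v x1)"
  define z2 where "z2 = dehom m (P *\<^sub>v x2)"
  have Q: "Q \<in> carrier_mat n n" "det Q \<noteq> 0"
    unfolding Q_def n using normal_frame_adj[OF card frame] by auto
  have z: "z1 \<in> carrier_vec (n - 1)" "z2 \<in> carrier_vec (n - 1)"
    unfolding z1_def z2_def n by simp_all
  have N1: "N1 = Q * block_z q n z1 * adj q Q"
    using inverse_leaf_normal_form[OF card assms(2) frame, of x1 N1] x1 assms(10,12,13)
    unfolding Q_def z1_def n by (simp add: adj_adj[OF card])
  have N2: "N2 = Q * block_z q n z2 * adj q Q"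
    using inverse_leaf_normal_form[OF card assms(2) frame, of x2 N2] x2 assms(14,16,17)
    unfolding Q_def z2_def n by (simp add: adj_adj[OF card])
  have "z1 \<noteq> z2"
    using normal_frame_leaf_eq_of_dehom_eq[OF card frame, of x1 x2] x1 x2 assms(9)
    unfolding z1_def z2_def n by auto
  then have "vec_space.rank n (N1 - N2) = 2"
    unfolding N1 N2 using rank_star_block_z_diff[OF card Q[unfolded n]] z unfolding n by simp
  then show ?thesis
    using Q invertible_mat_of_det z N1 N2 \<open>z1 \<noteq> z2\<close> by blast
qed

end
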